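(* Let $x\in\operatorname{dom}f$ and assume (SH). If moreover the map $t\mapsto f_t(x)$ is lower semicontinuous on $T$, then $\inf_{t\in T}f_t(x)>-\infty$, and consequently for every $\varepsilon>0$, \[ \mathrm{N}_{\operatorname{dom}f}(x)=\Big[\overline{\operatorname{co}}\Big(\bigcup_{t\in T}\partial_\varepsilon f_t(x)\Big)\Big]_\infty . \]
   Context: $X$ is a real separated locally convex space with dual $X^*$ carrying the weak$^*$ topology. $T$ is a nonempty index set, $\{f_t: t\in T\}$ are proper convex lsc functions $X\to\mathbb{R}\cup\{+\infty\}$, $f:=\sup_{t\in T}f_t$. $\partial_\varepsilon g(x)$ is the $\varepsilon$-subdifferential; $\overline{\operatorname{co}}$ is the weak$^*$-closed convex hull; $C_\infty$ is the recession cone of a nonempty closed convex set $C$; $\mathrm{N}_A(x)$ is the normal cone. (SH): $T$ is compact Hausdorff and $t\mapsto f_t(z)$ is upper semicontinuous on $T$ for each $z\in X$. *)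

theory Defs
  imports "HOL-Analysis.Analysis"
begin

definition lcs :: "'a::real_vector topology \<Rightarrow> bool" where
  "lcs \<tau> \<longleftrightarrow> topspace \<tau> = UNIV \<and> Hausdorff_space \<tau>
     \<and> continuous_map (prod_topology \<tau> \<tau>) \<tau> (\<lambda>(x,y). x + y)
     \<and> continuous_map (prod_topology euclideanreal \<tau>) \<tau> (\<lambda>(a,x). a *\<^sub>R x)
     \<and> (\<forall>U. openin \<tau> U \<and> 0 \<in> U \<longrightarrow> (\<exists>V. openin \<tau> V \<and> convex V \<and> 0 \<in> V \<and> V \<subseteq> U))"

definition dual :: "'a::real_vector topology \<Rightarrow> ('a \<Rightarrow> real) set" where
  "dual \<tau> = {\<phi>. linear \<phi> \<and> continuous_map \<tau> euclideanreal \<phi>}"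

definition wstar :: "'a::real_vector topology \<Rightarrow> ('a \<Rightarrow> real) topology" where
  "wstar \<tau> = subtopology (product_topology (\<lambda>_. euclideanreal) UNIV) (dual \<tau>)"

definition fconvex :: "('a \<Rightarrow> real) set \<Rightarrow> bool" where
  "fconvex A \<longleftrightarrow> (\<forall>\<phi>\<in>A. \<forall>\<psi>\<in>A. \<forall>u::real. 0 \<le> u \<and> u \<le> 1 \<longrightarrow> (\<lambda>z. u * \<phi> z + (1 - u) * \<psi> z) \<in> A)"

definition wstar_clco :: "'a::real_vector topology \<Rightarrow> ('a \<Rightarrow> real) set \<Rightarrow> ('a \<Rightarrow> real) set" where
  "wstar_clco \<tau> S = \<Inter>{A. A \<subseteq> dual \<tau> \<and> closedin (wstar \<tau>) A \<and> fconvex A \<and> S \<subseteq> A}"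

definition recession_cone :: "('a \<Rightarrow> real) set \<Rightarrow> ('a \<Rightarrow> real) set" where
  "recession_cone C = {d. \<forall>y\<in>C. \<forall>l::real. l \<ge> 0 \<longrightarrow> (\<lambda>z. y z + l * d z) \<in> C}"

definition normal_cone :: "'a::real_vector topology \<Rightarrow> 'a set \<Rightarrow> 'a \<Rightarrow> ('a \<Rightarrow> real) set" where
  "normal_cone \<tau> A x = {\<phi> \<in> dual \<tau>. \<forall>y\<in>A. \<phi> (y - x) \<le> 0}"

definition edom :: "('a \<Rightarrow> ereal) \<Rightarrow> 'a set" where
  "edom g = {z. g z < \<infinity>}"

definition eps_subdiff :: "'a::real_vector topology \<Rightarrow> real \<Rightarrow> ('a \<Rightarrow> ereal) \<Rightarrow> 'a \<Rightarrow> ('a \<Rightarrow> real) set" where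
  "eps_subdiff \<tau> \<epsilon> g x = {\<phi> \<in> dual \<tau>. \<bar>g x\<bar> \<noteq> \<infinity> \<and>
      (\<forall>y. g y \<ge> g x + ereal (\<phi> (y - x) - \<epsilon>))}"

definition proper_fn :: "('a \<Rightarrow> ereal) \<Rightarrow> bool" where
  "proper_fn g \<longleftrightarrow> (\<forall>z. g z \<noteq> -\<infinity>) \<and> (\<exists>z. g z \<noteq> \<infinity>)"

definition convex_fn :: "('a::real_vector \<Rightarrow> ereal) \<Rightarrow> bool" where
  "convex_fn g \<longleftrightarrow> (\<forall>y z. \<forall>u::real. 0 < u \<and> u < 1 \<longrightarrow>
      g (u *\<^sub>R y + (1 - u) *\<^sub>R z) \<le> ereal u * g y + ereal (1 - u) * g z)"

definition lsc_on :: "'a topology \<Rightarrow> ('a \<Rightarrow> ereal) \<Rightarrow> bool" where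
  "lsc_on \<sigma> g \<longleftrightarrow> (\<forall>c::real. closedin \<sigma> {z \<in> topspace \<sigma>. g z \<le> ereal c})"

definition usc_on :: "'a topology \<Rightarrow> ('a \<Rightarrow> ereal) \<Rightarrow> bool" where
  "usc_on \<sigma> g \<longleftrightarrow> (\<forall>c::real. openin \<sigma> {z \<in> topspace \<sigma>. g z < ereal c})"

end

theory Submission
  imports Defs "HOL-Library.Function_Algebras"
begin

(* Lower semicontinuity of t |-> f_t(x) on the compact space T bounds these values below.

   For the cone identity let C be the weak*-closed convex hull of the epsilon-subdifferentials
   of the f_t at x.  If phi is normal to dom f at x but y + l phi leaves C for some y in C,
   separating y + l phi from C in the weak* topology gives a direction z along which C is
   bounded by some c while phi z > 0.  Every f_t must then fall below slope c + 1 somewhere on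
   the ray x + l z: otherwise separating the epigraph of f_t (an algebraic Hahn-Banach argument)
   from a tube around a segment under the graph would produce an epsilon-subgradient with value
   above c at z.  Upper semicontinuity in t, compactness of T and convexity give a single step
   mu > 0 with x + mu z in dom f, contradicting phi z > 0.  Conversely, for w in dom f the
   epsilon-subgradients are bounded on w - x, a half-space condition inherited by C, so every
   recession direction of C is normal to dom f at x. *)

section \<open>Hahn-Banach theorem for sublinear functionals\<close>

definition sublinear :: "('v::real_vector \<Rightarrow> real) \<Rightarrow> bool" where
  "sublinear p \<longleftrightarrow> (\<forall>x y. p (x + y) \<le> p x + p y) \<and> (\<forall>c x. 0 \<le> c \<longrightarrow> p (c *\<^sub>R x) = c * p x)"

lemma sublinear_add_le: "sublinear p \<Longrightarrow> p (x + y) \<le> p x + p y"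
  unfolding sublinear_def by blast

lemma sublinear_scale: "sublinear p \<Longrightarrow> 0 \<le> c \<Longrightarrow> p (c *\<^sub>R x) = c * p x"
  unfolding sublinear_def by blast

lemma sublinear_zero: "sublinear p \<Longrightarrow> p 0 = 0"
  using sublinear_scale[of p 0 0] by simp

lemma sublinear_neg_le: "sublinear p \<Longrightarrow> - p (- x) \<le> p x"
  using sublinear_add_le[of p x "- x"] sublinear_zero[of p] by simp

(* Partial extensions are represented by their graphs, so that the union of a chain is an
   upper bound for Zorn's lemma. *)
definition dominated_linear_graph :: "('v::real_vector \<Rightarrow> real) \<Rightarrow> 'v \<Rightarrow> ('v \<times> real) set \<Rightarrow> bool" where
  "dominated_linear_graph p v0 G \<longleftrightarrow>
     (\<forall>a r r'. (a, r) \<in> G \<longrightarrow> (a, r') \<in> G \<longrightarrow> r = r') \<and> (v0, p v0) \<in> G \<and>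
     (\<forall>a r b s. (a, r) \<in> G \<longrightarrow> (b, s) \<in> G \<longrightarrow> (a + b, r + s) \<in> G) \<and>
     (\<forall>a r c. (a, r) \<in> G \<longrightarrow> (c *\<^sub>R a, c * r) \<in> G) \<and> (\<forall>a r. (a, r) \<in> G \<longrightarrow> r \<le> p a)"

lemma dominated_linear_graphD:
  assumes "dominated_linear_graph p v0 G"
  shows dominated_linear_graph_unique: "\<And>a r r'. (a, r) \<in> G \<Longrightarrow> (a, r') \<in> G \<Longrightarrow> r = r'"
    and dominated_linear_graph_base: "(v0, p v0) \<in> G"
    and dominated_linear_graph_add: "\<And>a r b s. (a, r) \<in> G \<Longrightarrow> (b, s) \<in> G \<Longrightarrow> (a + b, r + s) \<in> G"
    and dominated_linear_graph_scale: "\<And>a r c. (a, r) \<in> G \<Longrightarrow> (c *\<^sub>R a, c * r) \<in> G"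
    and dominated_linear_graph_le: "\<And>a r. (a, r) \<in> G \<Longrightarrow> r \<le> p a"
  using assms unfolding dominated_linear_graph_def by blast+

lemma dominated_linear_graph_line:
  assumes p: "sublinear p"
  shows "dominated_linear_graph p v0 {(t *\<^sub>R v0, t * p v0) | t. True}" (is "dominated_linear_graph p v0 ?G")
proof -
  have le: "t * p v0 \<le> p (t *\<^sub>R v0)" for t
  proof (cases "t \<ge> 0")
    case True
    then show ?thesis using sublinear_scale[OF p] by simp
  next
    case False
    have "t * p v0 \<le> (- t) * p (- v0)"
      using mult_left_mono_neg[OF sublinear_neg_le[OF p, of v0], of t] False by simp
    also have "\<dots> = p (t *\<^sub>R v0)"
      using False sublinear_scale[OF p, of "- t" "- v0"] by simp
    finally show ?thesis .
  qed
  have "t * p v0 = t' * p v0" if "t *\<^sub>R v0 = t' *\<^sub>R v0" for t t'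
    using that sublinear_zero[OF p] by (cases "v0 = 0") (auto simp: scaleR_cancel_right)
  then show ?thesis
    unfolding dominated_linear_graph_def
    by (auto simp: le scaleR_add_left[symmetric] distrib_right
             intro: exI[of _ 1] exI[of _ "_ + _"] exI[of _ "_ * _"])
qed

lemma dominated_linear_graph_Union_chain:
  assumes C: "C \<in> chains {G. dominated_linear_graph p v0 G}" "C \<noteq> {}"
  shows "dominated_linear_graph p v0 (\<Union>C)"
proof -
  have good: "dominated_linear_graph p v0 G" if "G \<in> C" for G
    using C that by (auto simp: chains_def)
  have common: "\<exists>G\<in>C. P \<in> G \<and> Q \<in> G" if "P \<in> \<Union>C" "Q \<in> \<Union>C" for P Q
  proof -
    obtain G H where "G \<in> C" "P \<in> G" "H \<in> C" "Q \<in> H"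
      using \<open>P \<in> \<Union>C\<close> \<open>Q \<in> \<Union>C\<close> by blast
    moreover have "G \<subseteq> H \<or> H \<subseteq> G"
      using C(1) \<open>G \<in> C\<close> \<open>H \<in> C\<close> by (auto simp: chains_def chain_subset_def)
    ultimately show ?thesis by blast
  qed
  show ?thesis
    unfolding dominated_linear_graph_def
  proof (intro conjI allI impI)
    show "(v0, p v0) \<in> \<Union>C"
      using C(2) good dominated_linear_graph_base by blast
  next
    fix a r r' assume "(a, r) \<in> \<Union>C" "(a, r') \<in> \<Union>C"
    then show "r = r'" using common good dominated_linear_graph_unique by metis
  next
    fix a r b s assume "(a, r) \<in> \<Union>C" "(b, s) \<in> \<Union>C"
    then show "(a + b, r + s) \<in> \<Union>C" using common good dominated_linear_graph_add by (metis UnionI)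
  qed (use good dominated_linear_graph_scale dominated_linear_graph_le in blast)+
qed

lemma dominated_linear_graph_extension_value:
  assumes p: "sublinear p" and G: "dominated_linear_graph p v0 G"
  obtains c where "\<And>a r. (a, r) \<in> G \<Longrightarrow> r - p (a - v) \<le> c"
    and "\<And>b s. (b, s) \<in> G \<Longrightarrow> c \<le> p (b + v) - s"
proof
  have key: "r - p (a - v) \<le> p (b + v) - s" if "(a, r) \<in> G" "(b, s) \<in> G" for a r b s
  proof -
    have "r + s \<le> p ((a - v) + (b + v))"
      using dominated_linear_graph_le[OF G dominated_linear_graph_add[OF G that]] by simp
    also have "\<dots> \<le> p (a - v) + p (b + v)" by (rule sublinear_add_le[OF p])
    finally show ?thesis by simp
  qed
  let ?L = "{r - p (a - v) | a r. (a, r) \<in> G}"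
  have base: "(v0, p v0) \<in> G" by (rule dominated_linear_graph_base[OF G])
  have "bdd_above ?L"
    using key[OF _ base] by (auto intro!: bdd_aboveI[of _ "p (v0 + v) - p v0"])
  then show "r - p (a - v) \<le> Sup ?L" if "(a, r) \<in> G" for a r
    using that by (auto intro!: cSup_upper)
  show "Sup ?L \<le> p (b + v) - s" if "(b, s) \<in> G" for b s
    using base key[OF _ that] by (auto intro!: cSup_least)
qed

lemma dominated_linear_graph_extension_le:
  assumes p: "sublinear p" and G: "dominated_linear_graph p v0 G"
    and lo: "\<And>a r. (a, r) \<in> G \<Longrightarrow> r - p (a - v) \<le> c"
    and hi: "\<And>b s. (b, s) \<in> G \<Longrightarrow> c \<le> p (b + v) - s"
    and ar: "(a, r) \<in> G"
  shows "r + t * c \<le> p (a + t *\<^sub>R v)"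
proof -
  consider "t > 0" | "t = 0" | "t < 0" by linarith
  then show ?thesis
  proof cases
    case 1
    have "c \<le> p (inverse t *\<^sub>R a + v) - inverse t * r"
      using hi[OF dominated_linear_graph_scale[OF G ar]] .
    then have "t * c \<le> t * p (inverse t *\<^sub>R a + v) - r"
      using 1 by (simp add: field_simps)
    also have "t * p (inverse t *\<^sub>R a + v) = p (t *\<^sub>R (inverse t *\<^sub>R a + v))"
      using 1 sublinear_scale[OF p, of t] by simp
    also have "t *\<^sub>R (inverse t *\<^sub>R a + v) = a + t *\<^sub>R v"
      using 1 by (simp add: scaleR_add_right)
    finally show ?thesis by simp
  next
    case 2
    then show ?thesis using dominated_linear_graph_le[OF G ar] by simp
  next
    case 3
    have "inverse (- t) * r - p (inverse (- t) *\<^sub>R a - v) \<le> c"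
      using lo[OF dominated_linear_graph_scale[OF G ar]] .
    then have "r - (- t) * p (inverse (- t) *\<^sub>R a - v) \<le> (- t) * c"
      using 3 by (simp add: field_simps)
    also have "(- t) * p (inverse (- t) *\<^sub>R a - v) = p ((- t) *\<^sub>R (inverse (- t) *\<^sub>R a - v))"
      using 3 sublinear_scale[OF p, of "- t"] by simp
    also have "(- t) *\<^sub>R (inverse (- t) *\<^sub>R a - v) = a + t *\<^sub>R v"
      using 3 by (simp add: scaleR_diff_right)
    finally show ?thesis by (simp add: algebra_simps)
  qed
qed

lemma dominated_linear_graph_decomposition_unique:
  assumes G: "dominated_linear_graph p v0 G" and v: "\<forall>r. (v, r) \<notin> G"
    and "(a, r) \<in> G" "(a', r') \<in> G" and eq: "a + t *\<^sub>R v = a' + t' *\<^sub>R v"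
  shows "t = t' \<and> a = a' \<and> r = r'"
proof -
  have "t = t'"
  proof (rule ccontr)
    assume "t \<noteq> t'"
    have "(inverse (t - t') *\<^sub>R (a' + (- 1) *\<^sub>R a), inverse (t - t') * (r' + (- 1) * r)) \<in> G"
      using assms(3,4) G by (blast intro: dominated_linear_graph_scale dominated_linear_graph_add)
    moreover have "a' + (- 1) *\<^sub>R a = (t - t') *\<^sub>R v"
      using eq by (simp add: algebra_simps)
    ultimately show False using v \<open>t \<noteq> t'\<close> by auto
  qed
  then show ?thesis using eq assms(3,4) dominated_linear_graph_unique[OF G] by auto
qed

lemma dominated_linear_graph_adjoin:
  assumes p: "sublinear p" and G: "dominated_linear_graph p v0 G" and v: "\<forall>r. (v, r) \<notin> G"
    and lo: "\<And>a r. (a, r) \<in> G \<Longrightarrow> r - p (a - v) \<le> c"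
    and hi: "\<And>b s. (b, s) \<in> G \<Longrightarrow> c \<le> p (b + v) - s"
  shows "dominated_linear_graph p v0 {(a + t *\<^sub>R v, r + t * c) | a r t. (a, r) \<in> G}"
    (is "dominated_linear_graph p v0 ?G'")
proof -
  have G'I: "(a + t *\<^sub>R v, r + t * c) \<in> ?G'" if "(a, r) \<in> G" for a r t
    using that by blast
  show ?thesis
    unfolding dominated_linear_graph_def
  proof (intro conjI allI impI)
    fix a r r' assume "(a, r) \<in> ?G'" "(a, r') \<in> ?G'"
    then obtain a1 r1 t1 a2 r2 t2 where "(a1, r1) \<in> G" "(a2, r2) \<in> G"
      and "(a, r) = (a1 + t1 *\<^sub>R v, r1 + t1 * c)" "(a, r') = (a2 + t2 *\<^sub>R v, r2 + t2 * c)"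
      by blast
    then show "r = r'"
      using dominated_linear_graph_decomposition_unique[OF G v, of a1 r1 a2 r2 t1 t2] by simp
  next
    show "(v0, p v0) \<in> ?G'" using G'I[OF dominated_linear_graph_base[OF G], of 0] by simp
  next
    fix a r b s assume "(a, r) \<in> ?G'" "(b, s) \<in> ?G'"
    then obtain a1 r1 t1 a2 r2 t2 where "(a1, r1) \<in> G" "(a2, r2) \<in> G"
      and "(a, r) = (a1 + t1 *\<^sub>R v, r1 + t1 * c)" "(b, s) = (a2 + t2 *\<^sub>R v, r2 + t2 * c)"
      by blast
    moreover have "((a1 + a2) + (t1 + t2) *\<^sub>R v, (r1 + r2) + (t1 + t2) * c) \<in> ?G'"
      by (rule G'I[OF dominated_linear_graph_add[OF G]]) fact+
    ultimately show "(a + b, r + s) \<in> ?G'" by (simp add: algebra_simps)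
  next
    fix a r d assume "(a, r) \<in> ?G'"
    then obtain a1 r1 t1 where "(a1, r1) \<in> G" "(a, r) = (a1 + t1 *\<^sub>R v, r1 + t1 * c)"
      by blast
    moreover have "(d *\<^sub>R a1 + (d * t1) *\<^sub>R v, d * r1 + (d * t1) * c) \<in> ?G'"
      by (rule G'I[OF dominated_linear_graph_scale[OF G]]) fact
    ultimately show "(d *\<^sub>R a, d * r) \<in> ?G'" by (simp add: algebra_simps)
  next
    fix a r assume "(a, r) \<in> ?G'"
    then show "r \<le> p a"
      using dominated_linear_graph_extension_le[OF p G lo hi] by blast
  qed
qed

lemma dominated_linear_graph_extend:
  assumes p: "sublinear p" and G: "dominated_linear_graph p v0 G" and v: "\<forall>r. (v, r) \<notin> G"
  shows "\<exists>G'. dominated_linear_graph p v0 G' \<and> G \<subset> G'"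
proof -
  obtain c where lo: "\<And>a r. (a, r) \<in> G \<Longrightarrow> r - p (a - v) \<le> c"
    and hi: "\<And>b s. (b, s) \<in> G \<Longrightarrow> c \<le> p (b + v) - s"
    using dominated_linear_graph_extension_value[OF p G] by metis
  let ?G' = "{(a + t *\<^sub>R v, r + t * c) | a r t. (a, r) \<in> G}"
  have "G \<subseteq> ?G'"
    by (force intro: exI[of _ 0])
  moreover have "(0, 0) \<in> G"
    using dominated_linear_graph_scale[OF G dominated_linear_graph_base[OF G], of 0] by simp
  then have "(0 + 1 *\<^sub>R v, 0 + 1 * c) \<in> ?G'" by blast
  then have "(v, c) \<in> ?G' - G" using v by simp
  ultimately have "G \<subset> ?G'" by blast
  then show ?thesis using dominated_linear_graph_adjoin[OF p G v lo hi] by blast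
qed

theorem Hahn_Banach_sublinear:
  assumes p: "sublinear (p :: 'v::real_vector \<Rightarrow> real)"
  shows "\<exists>F. linear F \<and> (\<forall>x. F x \<le> p x) \<and> F v0 = p v0"
proof -
  have "\<exists>U\<in>{G. dominated_linear_graph p v0 G}. \<forall>G\<in>C. G \<subseteq> U"
    if "C \<in> chains {G. dominated_linear_graph p v0 G}" for C
    using that dominated_linear_graph_line[OF p] dominated_linear_graph_Union_chain
    by (cases "C = {}") blast+
  then obtain M where M: "dominated_linear_graph p v0 M"
    and max: "\<And>G. dominated_linear_graph p v0 G \<Longrightarrow> M \<subseteq> G \<Longrightarrow> G = M"
    using Zorn_Lemma2[of "{G. dominated_linear_graph p v0 G}"] by auto
  have "\<forall>x. \<exists>r. (x, r) \<in> M"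
    using dominated_linear_graph_extend[OF p M] max by blast
  then obtain F where F: "\<And>x. (x, F x) \<in> M" by metis
  have F_eq: "F x = r" if "(x, r) \<in> M" for x r
    using dominated_linear_graph_unique[OF M F that] .
  have "linear F"
    by (rule linearI) (use F dominated_linear_graph_add[OF M] dominated_linear_graph_scale[OF M] F_eq in auto)
  then show ?thesis
    using F dominated_linear_graph_le[OF M] F_eq[OF dominated_linear_graph_base[OF M]] by blast
qed

section \<open>Separation of convex sets in real vector spaces\<close>

definition absorbing :: "'v::real_vector set \<Rightarrow> bool" where
  "absorbing D \<longleftrightarrow> (\<forall>v. \<exists>t>0. t *\<^sub>R v \<in> D)"

definition algebraically_open :: "'v::real_vector set \<Rightarrow> bool" where
  "algebraically_open A \<longleftrightarrow> (\<forall>a\<in>A. \<forall>d. \<exists>t>0. a + t *\<^sub>R d \<in> A)"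

lemma algebraically_openD: "algebraically_open A \<Longrightarrow> a \<in> A \<Longrightarrow> \<exists>t>0. a + t *\<^sub>R d \<in> A"
  unfolding algebraically_open_def by blast

definition minkowski_gauge :: "'v::real_vector set \<Rightarrow> 'v \<Rightarrow> real" where
  "minkowski_gauge D v = Inf {t. 0 < t \<and> inverse t *\<^sub>R v \<in> D}"

context
  fixes D :: "'v::real_vector set"
  assumes convex: "convex D" and absorbing: "absorbing D"
begin

lemma minkowski_gauge_le: "0 < t \<Longrightarrow> inverse t *\<^sub>R v \<in> D \<Longrightarrow> minkowski_gauge D v \<le> t"
  unfolding minkowski_gauge_def by (rule cInf_lower) (auto intro: bdd_belowI[of _ 0])

lemma minkowski_gauge_ge:
  assumes "\<And>t. 0 < t \<Longrightarrow> inverse t *\<^sub>R v \<in> D \<Longrightarrow> c \<le> t"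
  shows "c \<le> minkowski_gauge D v"
proof -
  obtain t where "0 < t" "t *\<^sub>R v \<in> D"
    using absorbing unfolding absorbing_def by blast
  then have "inverse t \<in> {t. 0 < t \<and> inverse t *\<^sub>R v \<in> D}" by simp
  then show ?thesis
    unfolding minkowski_gauge_def using assms by (metis (mono_tags) cInf_greatest empty_iff mem_Collect_eq)
qed

lemma minkowski_gauge_nonneg: "0 \<le> minkowski_gauge D v"
  by (rule minkowski_gauge_ge) simp

lemma zero_in_absorbing: "0 \<in> D"
  using absorbing unfolding absorbing_def by (metis scaleR_zero_right)

lemma inverse_scaleR_mem_mono:
  assumes "0 < t" "t \<le> t'" "inverse t *\<^sub>R v \<in> D"
  shows "inverse t' *\<^sub>R v \<in> D"
proof -
  have "(t / t') *\<^sub>R (inverse t *\<^sub>R v) + (1 - t / t') *\<^sub>R 0 \<in> D"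
    using assms by (intro convexD[OF convex _ zero_in_absorbing]) auto
  then show ?thesis using assms by (simp add: inverse_eq_divide)
qed

lemma minkowski_gauge_triangle: "minkowski_gauge D (u + v) \<le> minkowski_gauge D u + minkowski_gauge D v"
proof -
  have sum: "minkowski_gauge D (u + v) \<le> s + t"
    if s: "0 < s" "inverse s *\<^sub>R u \<in> D" and t: "0 < t" "inverse t *\<^sub>R v \<in> D" for s t
  proof (rule minkowski_gauge_le)
    have "(s / (s + t)) *\<^sub>R (inverse s *\<^sub>R u) + (1 - s / (s + t)) *\<^sub>R (inverse t *\<^sub>R v) \<in> D"
      using s t by (intro convexD[OF convex]) (auto simp: divide_le_eq_1)
    moreover have "(s / (s + t)) *\<^sub>R (inverse s *\<^sub>R u) + (1 - s / (s + t)) *\<^sub>R (inverse t *\<^sub>R v)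
        = inverse (s + t) *\<^sub>R (u + v)"
      using s t by (simp add: field_simps scaleR_add_right)
    ultimately show "inverse (s + t) *\<^sub>R (u + v) \<in> D" by simp
  qed (use s t in simp)
  have step: "minkowski_gauge D (u + v) - s \<le> minkowski_gauge D v"
    if s: "0 < s" "inverse s *\<^sub>R u \<in> D" for s
  proof (rule minkowski_gauge_ge)
    fix t assume "0 < t" "inverse t *\<^sub>R v \<in> D"
    then show "minkowski_gauge D (u + v) - s \<le> t" using sum[OF s] by fastforce
  qed
  have "minkowski_gauge D (u + v) - minkowski_gauge D v \<le> minkowski_gauge D u"
  proof (rule minkowski_gauge_ge)
    fix s assume "0 < s" "inverse s *\<^sub>R u \<in> D"
    then show "minkowski_gauge D (u + v) - minkowski_gauge D v \<le> s" using step by fastforce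
  qed
  then show ?thesis by simp
qed

lemma minkowski_gauge_scale:
  assumes "0 < c"
  shows "minkowski_gauge D (c *\<^sub>R v) = c * minkowski_gauge D v"
proof (rule antisym)
  have "minkowski_gauge D (c *\<^sub>R v) / c \<le> minkowski_gauge D v"
  proof (rule minkowski_gauge_ge)
    fix t assume "0 < t" "inverse t *\<^sub>R v \<in> D"
    moreover have "inverse (c * t) *\<^sub>R (c *\<^sub>R v) = inverse t *\<^sub>R v"
      using assms by simp
    ultimately have "minkowski_gauge D (c *\<^sub>R v) \<le> c * t"
      using assms \<open>0 < t\<close> by (metis minkowski_gauge_le mult_pos_pos)
    then show "minkowski_gauge D (c *\<^sub>R v) / c \<le> t" using assms by (simp add: field_simps)
  qed
  then show "minkowski_gauge D (c *\<^sub>R v) \<le> c * minkowski_gauge D v"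
    using assms by (simp add: field_simps)
next
  show "c * minkowski_gauge D v \<le> minkowski_gauge D (c *\<^sub>R v)"
  proof (rule minkowski_gauge_ge)
    fix t assume "0 < t" "inverse t *\<^sub>R (c *\<^sub>R v) \<in> D"
    then have "minkowski_gauge D v \<le> t / c"
      using assms by (intro minkowski_gauge_le) (auto simp: field_simps)
    then show "c * minkowski_gauge D v \<le> t" using assms by (simp add: field_simps)
  qed
qed

lemma minkowski_gauge_zero: "minkowski_gauge D 0 = 0"
proof -
  have "minkowski_gauge D 0 \<le> 0 + e" if "0 < e" for e
    using minkowski_gauge_le[OF that, of 0] zero_in_absorbing by simp
  then have "minkowski_gauge D 0 \<le> 0" by (rule field_le_epsilon)
  then show ?thesis using minkowski_gauge_nonneg[of 0] by simp
qed

lemma sublinear_minkowski_gauge: "sublinear (minkowski_gauge D)"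
  unfolding sublinear_def
proof (intro conjI allI impI)
  show "minkowski_gauge D (x + y) \<le> minkowski_gauge D x + minkowski_gauge D y" for x y
    by (rule minkowski_gauge_triangle)
  show "minkowski_gauge D (c *\<^sub>R x) = c * minkowski_gauge D x" if "0 \<le> c" for c x
    using that minkowski_gauge_scale[of c x] minkowski_gauge_zero by (cases "c = 0") auto
qed

lemma minkowski_gauge_ge_1:
  assumes "v \<notin> D"
  shows "1 \<le> minkowski_gauge D v"
proof (rule minkowski_gauge_ge)
  fix t assume t: "0 < t" "inverse t *\<^sub>R v \<in> D"
  show "1 \<le> t"
  proof (rule ccontr)
    assume "\<not> 1 \<le> t"
    then have "inverse 1 *\<^sub>R v \<in> D"
      by (intro inverse_scaleR_mem_mono[OF t(1) _ t(2)]) simp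
    then show False using assms by simp
  qed
qed

end

lemma separation_point_algebraically_open:
  fixes D :: "'v::real_vector set"
  assumes "convex D" "algebraically_open D" "0 \<in> D" "v \<notin> D"
  shows "\<exists>F::'v \<Rightarrow> real. linear F \<and> (\<forall>d\<in>D. F d < 1) \<and> 1 \<le> F v"
proof -
  have abs: "absorbing D"
    using algebraically_openD[OF assms(2,3)] unfolding absorbing_def by simp
  obtain F where F: "linear F" "\<And>x. F x \<le> minkowski_gauge D x" "F v = minkowski_gauge D v"
    using Hahn_Banach_sublinear[OF sublinear_minkowski_gauge[OF assms(1) abs]] by blast
  have "F d < 1" if d: "d \<in> D" for d
  proof -
    obtain \<delta> where "0 < \<delta>" "d + \<delta> *\<^sub>R d \<in> D"
      using algebraically_openD[OF assms(2) d] by blast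
    moreover have "d + \<delta> *\<^sub>R d = inverse (inverse (1 + \<delta>)) *\<^sub>R d"
      by (simp add: algebra_simps)
    ultimately have "minkowski_gauge D d \<le> inverse (1 + \<delta>)"
      by (metis minkowski_gauge_le[OF assms(1) abs] add_pos_pos inverse_positive_iff_positive zero_less_one)
    also have "\<dots> < 1" using \<open>0 < \<delta>\<close> by (simp add: inverse_less_1_iff)
    finally show ?thesis using F(2)[of d] by simp
  qed
  moreover have "1 \<le> F v"
    using F(3) minkowski_gauge_ge_1[OF assms(1) abs assms(4)] by simp
  ultimately show ?thesis using F(1) by blast
qed

lemma algebraically_open_differences:
  assumes "algebraically_open A"
  shows "algebraically_open {a - e - c | a e. a \<in> A \<and> e \<in> E}" (is "algebraically_open ?D")
  unfolding algebraically_open_def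
proof (intro ballI allI)
  fix d v assume "d \<in> ?D"
  then obtain a e where "a \<in> A" "e \<in> E" and d: "d = a - e - c" by blast
  then obtain t where "0 < t" "a + t *\<^sub>R v \<in> A"
    using algebraically_openD[OF assms] by blast
  moreover have "d + t *\<^sub>R v = (a + t *\<^sub>R v) - e - c"
    unfolding d by (simp add: algebra_simps)
  ultimately show "\<exists>t>0. d + t *\<^sub>R v \<in> ?D"
    using \<open>e \<in> E\<close> by blast
qed

theorem separation_algebraically_open:
  fixes A E :: "'v::real_vector set"
  assumes "convex A" "convex E" "algebraically_open A" "A \<inter> E = {}"
  shows "\<exists>F::'v \<Rightarrow> real. linear F \<and> (\<forall>a\<in>A. \<forall>e\<in>E. F a < F e)"
proof (cases "A = {} \<or> E = {}")
  case True
  then show ?thesis using linear_zero by blast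
next
  case False
  then obtain a0 e0 where "a0 \<in> A" "e0 \<in> E" by blast
  define c where "c = a0 - e0"
  define D where "D = {a - e - c | a e. a \<in> A \<and> e \<in> E}"
  have "D = (\<lambda>y. y - c) ` (\<Union>a\<in>A. \<Union>e\<in>E. {a - e})"
    unfolding D_def by blast
  then have "convex D"
    by (simp only:) (intro convex_translation_subtract convex_differences assms)
  moreover have "algebraically_open D"
    unfolding D_def by (rule algebraically_open_differences[OF assms(3)])
  moreover have "0 \<in> D"
    unfolding D_def c_def using \<open>a0 \<in> A\<close> \<open>e0 \<in> E\<close> by force
  moreover have "- c \<notin> D"
  proof
    assume "- c \<in> D"
    then obtain a e where "a \<in> A" "e \<in> E" "- c = a - e - c"
      unfolding D_def by blast
    then show False using assms(4) by (simp add: algebra_simps) blast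
  qed
  ultimately obtain F :: "'v \<Rightarrow> real" where F: "linear F" "\<forall>d\<in>D. F d < 1" "1 \<le> F (- c)"
    using separation_point_algebraically_open by blast
  have "F a < F e" if "a \<in> A" "e \<in> E" for a e
  proof -
    have "F (a - e - c) < F (- c)"
      using F that unfolding D_def by fastforce
    then show ?thesis using F(1) by (simp add: linear_diff linear_neg)
  qed
  then show ?thesis using F(1) by blast
qed

lemma linear_separation_margin:
  fixes F :: "'v::real_vector \<Rightarrow> real"
  assumes F: "linear F" and A: "algebraically_open A" "q \<in> A" and sep: "\<forall>a\<in>A. \<forall>e\<in>E. F a < F e"
  shows "\<exists>\<gamma>>0. \<forall>e\<in>E. F q + \<gamma> \<le> F e"
proof (cases "E = {}")
  case True
  then show ?thesis by (intro exI[of _ 1]) simp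
next
  case False
  then obtain e0 where "e0 \<in> E" by blast
  obtain h where "F h \<noteq> 0"
    using sep A(2) \<open>e0 \<in> E\<close> by fastforce
  then have h: "F (inverse (F h) *\<^sub>R h) = 1" using F by (simp add: linear_scale)
  obtain t where "0 < t" and t: "q + t *\<^sub>R (inverse (F h) *\<^sub>R h) \<in> A"
    using algebraically_openD[OF A] by blast
  have "F (q + t *\<^sub>R (inverse (F h) *\<^sub>R h)) = F q + t"
    using F h by (simp add: linear_add linear_scale)
  then have "F q + t \<le> F e" if "e \<in> E" for e
    using sep t that by (metis less_imp_le)
  then show ?thesis using \<open>0 < t\<close> by blast
qed

lemma algebraically_open_convex_segment:
  assumes "convex U" "u \<in> U" "u + t *\<^sub>R d \<in> U" "0 \<le> s" "s \<le> t"
  shows "u + s *\<^sub>R d \<in> U"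
proof (cases "t = 0")
  case True
  then show ?thesis using assms by simp
next
  case False
  have "(1 - s / t) *\<^sub>R u + (s / t) *\<^sub>R (u + t *\<^sub>R d) \<in> U"
    using assms False by (intro convexD) auto
  moreover have "(1 - s / t) *\<^sub>R u + (s / t) *\<^sub>R (u + t *\<^sub>R d) = u + s *\<^sub>R d"
    using False by (simp add: algebra_simps)
  ultimately show ?thesis by simp
qed

lemma algebraically_open_Times:
  assumes "convex U" "convex V" "algebraically_open U" "algebraically_open V"
  shows "algebraically_open (U \<times> V)"
  unfolding algebraically_open_def
proof (clarsimp)
  fix u v d1 d2 assume "u \<in> U" "v \<in> V"
  obtain t1 t2 where "0 < t1" "u + t1 *\<^sub>R d1 \<in> U" "0 < t2" "v + t2 *\<^sub>R d2 \<in> V"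
    using algebraically_openD[OF assms(3) \<open>u \<in> U\<close>] algebraically_openD[OF assms(4) \<open>v \<in> V\<close>] by blast
  then have "u + min t1 t2 *\<^sub>R d1 \<in> U" "v + min t1 t2 *\<^sub>R d2 \<in> V"
    using algebraically_open_convex_segment[OF assms(1) \<open>u \<in> U\<close>, of t1 d1 "min t1 t2"]
      algebraically_open_convex_segment[OF assms(2) \<open>v \<in> V\<close>, of t2 d2 "min t1 t2"] by auto
  then show "\<exists>t>0. u + t *\<^sub>R d1 \<in> U \<and> v + t *\<^sub>R d2 \<in> V"
    using \<open>0 < t1\<close> \<open>0 < t2\<close> by (intro exI[of _ "min t1 t2"]) auto
qed

lemma algebraically_open_sums:
  assumes "algebraically_open U"
  shows "algebraically_open (\<Union>p\<in>S. \<Union>q\<in>U. {p + q})"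
  unfolding algebraically_open_def
proof (clarsimp)
  fix p q d assume "p \<in> S" "q \<in> U"
  then obtain t where "0 < t" "q + t *\<^sub>R d \<in> U"
    using algebraically_openD[OF assms] by blast
  moreover have "p + q + t *\<^sub>R d = p + (q + t *\<^sub>R d)" by (simp add: add.assoc)
  ultimately show "\<exists>t>0. \<exists>p'\<in>S. \<exists>q'\<in>U. p + q + t *\<^sub>R d = p' + q'"
    using \<open>p \<in> S\<close> by blast
qed

lemma open_imp_algebraically_open:
  fixes U :: "'a::real_normed_vector set"
  assumes "open U"
  shows "algebraically_open U"
  unfolding algebraically_open_def
proof (intro ballI allI)
  fix u and d :: 'a assume "u \<in> U"
  then obtain e where "0 < e" "ball u e \<subseteq> U"
    using assms open_contains_ball by blast
  define t where "t = e / (norm d + 1)"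
  have "0 < t"
    unfolding t_def using \<open>0 < e\<close> add_nonneg_pos[OF norm_ge_zero[of d] zero_less_one] by simp
  have "norm (t *\<^sub>R d) = e * (norm d / (norm d + 1))"
    using \<open>0 < e\<close> by (simp add: t_def)
  also have "\<dots> < e * 1"
    using \<open>0 < e\<close> by (intro mult_strict_left_mono) (auto simp: add_nonneg_pos)
  finally have "dist u (u + t *\<^sub>R d) < e" by (simp add: dist_norm)
  then have "u + t *\<^sub>R d \<in> ball u e" by simp
  then show "\<exists>t>0. u + t *\<^sub>R d \<in> U"
    using \<open>0 < t\<close> \<open>ball u e \<subseteq> U\<close> by blast
qed

lemma separation_nonvertical:
  fixes A E :: "('v::real_vector \<times> real) set"
  assumes "convex A" "convex E" "algebraically_open A" "A \<inter> E = {}"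
    and "(y0, r0) \<in> A" "(y0, r1) \<in> E" "r0 < r1"
  shows "\<exists>s::'v \<Rightarrow> real. linear s \<and> (\<forall>(y, r)\<in>A. \<forall>(y', r')\<in>E. r + s (y' - y) < r')"
proof -
  obtain F :: "'v \<times> real \<Rightarrow> real" where F: "linear F" and sep: "\<forall>a\<in>A. \<forall>e\<in>E. F a < F e"
    using separation_algebraically_open[OF assms(1-4)] by blast
  define \<beta> where "\<beta> = F (0, 1)"
  have F_split: "F (y, r) = F (y, 0) + r * \<beta>" for y r
    using linear_add[OF F, of "(y, 0)" "r *\<^sub>R (0, 1)"] linear_scale[OF F, of r "(0, 1)"]
    by (simp add: \<beta>_def)
  have "F (y0, r0) < F (y0, r1)"
    using sep assms(5,6) by blast
  then have "r0 * \<beta> < r1 * \<beta>"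
    using F_split[of y0 r0] F_split[of y0 r1] by simp
  then have "0 < \<beta>"
    using \<open>r0 < r1\<close> by (simp add: mult_less_cancel_right)
  have F0_add: "F (y + y', 0) = F (y, 0) + F (y', 0)" for y y'
    using linear_add[OF F, of "(y, 0)" "(y', 0)"] by simp
  have F0_scale: "F (c *\<^sub>R y, 0) = c * F (y, 0)" for c y
    using linear_scale[OF F, of c "(y, 0)"] by simp
  define s where "s y = - F (y, 0) / \<beta>" for y
  have "linear s"
    by (rule linearI) (simp_all add: s_def F0_add F0_scale diff_divide_distrib)
  moreover have "r + s (y' - y) < r'" if "(y, r) \<in> A" "(y', r') \<in> E" for y r y' r'
  proof -
    have "F (y, r) < F (y', r')"
      using sep that by blast
    then have "F (y, 0) + r * \<beta> < F (y', 0) + r' * \<beta>"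
      using F_split[of y r] F_split[of y' r'] by simp
    moreover have "F (y' - y, 0) = F (y', 0) - F (y, 0)"
      using F0_add[of "y' - y" y] by simp
    ultimately show ?thesis
      using \<open>0 < \<beta>\<close> by (simp add: s_def field_simps)
  qed
  ultimately show ?thesis by blast
qed

section \<open>Locally convex spaces\<close>

lemma lsc_on_openin_superlevel:
  assumes "lsc_on X g"
  shows "openin X {z \<in> topspace X. ereal c < g z}"
proof -
  have "{z \<in> topspace X. ereal c < g z} = topspace X - {z \<in> topspace X. g z \<le> ereal c}"
    by auto
  then show ?thesis
    using assms unfolding lsc_on_def by (simp add: openin_diff)
qed

locale lcs_space =
  fixes \<tau> :: "'a::real_vector topology"
  assumes lcs: "lcs \<tau>"
begin

lemma topspace_lcs [simp]: "topspace \<tau> = UNIV"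
  using lcs unfolding lcs_def by blast

lemma continuous_map_lcs_add:
  assumes "continuous_map X \<tau> f" "continuous_map X \<tau> g"
  shows "continuous_map X \<tau> (\<lambda>x. f x + g x)"
proof -
  have "continuous_map (prod_topology \<tau> \<tau>) \<tau> (\<lambda>(x, y). x + y)"
    using lcs unfolding lcs_def by blast
  from continuous_map_compose[OF continuous_map_pairedI[OF assms] this] show ?thesis
    by (simp add: o_def)
qed

lemma continuous_map_lcs_scaleR:
  assumes "continuous_map X euclideanreal f" "continuous_map X \<tau> g"
  shows "continuous_map X \<tau> (\<lambda>x. f x *\<^sub>R g x)"
proof -
  have "continuous_map (prod_topology euclideanreal \<tau>) \<tau> (\<lambda>(a, x). a *\<^sub>R x)"
    using lcs unfolding lcs_def by blast
  from continuous_map_compose[OF continuous_map_pairedI[OF assms] this] show ?thesis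
    by (simp add: o_def)
qed

lemma continuous_map_lcs_affine: "continuous_map \<tau> \<tau> (\<lambda>y. c *\<^sub>R y + a)"
  by (intro continuous_map_lcs_add continuous_map_lcs_scaleR continuous_map_id) simp_all

lemma openin_lcs_affine_preimage: "openin \<tau> U \<Longrightarrow> openin \<tau> {y. c *\<^sub>R y + a \<in> U}"
  using openin_continuous_map_preimage[OF continuous_map_lcs_affine] by simp

lemma openin_lcs_segment:
  assumes "openin \<tau> U" "u \<in> U"
  obtains e where "0 < e" "\<And>c. \<bar>c\<bar> < e \<Longrightarrow> u + c *\<^sub>R w \<in> U"
proof -
  have "continuous_map euclideanreal \<tau> (\<lambda>c. c *\<^sub>R w + u)"
    by (intro continuous_map_lcs_add continuous_map_lcs_scaleR continuous_map_id) simp_all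
  from openin_continuous_map_preimage[OF this assms(1)]
  have "open {c. c *\<^sub>R w + u \<in> U}" by simp
  moreover have "0 \<in> {c. c *\<^sub>R w + u \<in> U}" using assms(2) by simp
  ultimately obtain e where "0 < e" "ball 0 e \<subseteq> {c. c *\<^sub>R w + u \<in> U}"
    using open_contains_ball by blast
  then show ?thesis
    by (intro that[of e]) (auto simp: subset_iff dist_real_def add.commute)
qed

lemma openin_lcs_imp_algebraically_open:
  assumes "openin \<tau> U"
  shows "algebraically_open U"
  unfolding algebraically_open_def
proof (intro ballI allI)
  fix u d assume "u \<in> U"
  then obtain e where "0 < e" "\<And>c. \<bar>c\<bar> < e \<Longrightarrow> u + c *\<^sub>R d \<in> U"
    using openin_lcs_segment[OF assms] by metis
  then show "\<exists>t>0. u + t *\<^sub>R d \<in> U"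
    by (intro exI[of _ "e / 2"]) auto
qed

lemma lcs_convex_nbhd:
  assumes "openin \<tau> U" "0 \<in> U"
  obtains V where "openin \<tau> V" "convex V" "0 \<in> V" "V \<subseteq> U"
  using lcs assms unfolding lcs_def by blast

lemma linear_continuous_if_abs_bounded:
  assumes s: "linear s" and W: "openin \<tau> W" "0 \<in> W" and bound: "\<And>w. w \<in> W \<Longrightarrow> \<bar>s w\<bar> \<le> K"
  shows "continuous_map \<tau> euclideanreal s"
proof -
  have "0 \<le> K" using bound[OF W(2)] by simp
  have "openin \<tau> {y. s y \<in> U}" if "open U" for U
  proof (subst openin_subopen, intro ballI)
    fix y0 assume "y0 \<in> {y. s y \<in> U}"
    then obtain e where "0 < e" "ball (s y0) e \<subseteq> U"
      using \<open>open U\<close> open_contains_ball by blast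
    define \<delta> where "\<delta> = e / (K + 1)"
    have "0 < \<delta>" using \<open>0 < e\<close> \<open>0 \<le> K\<close> by (simp add: \<delta>_def)
    define T where "T = {y. inverse \<delta> *\<^sub>R y + (- inverse \<delta> *\<^sub>R y0) \<in> W}"
    have "openin \<tau> T" unfolding T_def by (rule openin_lcs_affine_preimage[OF W(1)])
    moreover have "y0 \<in> T" using W(2) by (simp add: T_def)
    moreover have "T \<subseteq> {y. s y \<in> U}"
    proof
      fix y assume "y \<in> T"
      then have "\<bar>s (inverse \<delta> *\<^sub>R y + (- inverse \<delta> *\<^sub>R y0))\<bar> \<le> K"
        using bound unfolding T_def by blast
      moreover have "inverse \<delta> *\<^sub>R y + (- inverse \<delta> *\<^sub>R y0) = inverse \<delta> *\<^sub>R (y - y0)"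
        by (simp add: scaleR_diff_right)
      then have "s (inverse \<delta> *\<^sub>R y + (- inverse \<delta> *\<^sub>R y0)) = inverse \<delta> * (s y - s y0)"
        using linear_scale[OF s] linear_diff[OF s] by simp
      ultimately have "inverse \<delta> * \<bar>s y - s y0\<bar> \<le> K"
        using \<open>0 < \<delta>\<close> by (simp add: abs_mult)
      then have "\<bar>s y - s y0\<bar> \<le> \<delta> * K"
        using \<open>0 < \<delta>\<close> by (simp add: field_simps)
      also have "\<delta> * K < e"
        using \<open>0 < e\<close> \<open>0 \<le> K\<close> by (simp add: \<delta>_def field_simps)
      finally show "y \<in> {y. s y \<in> U}"
        using \<open>ball (s y0) e \<subseteq> U\<close> by (auto simp: dist_real_def abs_minus_commute)
    qed
    ultimately show "\<exists>T. openin \<tau> T \<and> y0 \<in> T \<and> T \<subseteq> {y. s y \<in> U}" by blast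
  qed
  then show ?thesis unfolding continuous_map_def by simp
qed

lemma linear_continuous_if_bounded_above:
  assumes s: "linear s" and W: "openin \<tau> W" "0 \<in> W" and bound: "\<And>w. w \<in> W \<Longrightarrow> s w \<le> K"
  shows "continuous_map \<tau> euclideanreal s"
proof (rule linear_continuous_if_abs_bounded[OF s])
  show "openin \<tau> (W \<inter> {y. (- 1) *\<^sub>R y + 0 \<in> W})"
    by (rule openin_Int[OF W(1) openin_lcs_affine_preimage[OF W(1)]])
  show "0 \<in> W \<inter> {y. (- 1) *\<^sub>R y + 0 \<in> W}" using W(2) by simp
  show "\<bar>s w\<bar> \<le> K" if "w \<in> W \<inter> {y. (- 1) *\<^sub>R y + 0 \<in> W}" for w
    using that bound[of w] bound[of "- w"] linear_neg[OF s, of w] by auto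
qed

lemma openin_below_lsc_on_affine_family:
  assumes "lsc_on \<tau> g"
  shows "openin (prod_topology euclideanreal (prod_topology \<tau> euclideanreal))
           {(\<theta>, w, \<xi>). ereal (a + \<theta> * b + \<xi>) < g (x + \<theta> *\<^sub>R v + w)}"
    (is "openin ?X ?P")
proof (subst openin_subopen, intro ballI)
  fix p assume "p \<in> ?P"
  then obtain \<theta>0 w0 \<xi>0 where p: "p = (\<theta>0, w0, \<xi>0)"
    and "ereal (a + \<theta>0 * b + \<xi>0) < g (x + \<theta>0 *\<^sub>R v + w0)"
    by auto
  then obtain r where "ereal (a + \<theta>0 * b + \<xi>0) < ereal r" "ereal r < g (x + \<theta>0 *\<^sub>R v + w0)"
    using ereal_dense2 by blast
  then have r: "a + \<theta>0 * b + \<xi>0 < r" "ereal r < g (x + \<theta>0 *\<^sub>R v + w0)" by simp_all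
  have path: "continuous_map ?X \<tau> (\<lambda>q. x + fst q *\<^sub>R v + fst (snd q))"
    by (intro continuous_map_lcs_add continuous_map_lcs_scaleR continuous_map_fst
        continuous_map_fst_of[OF continuous_map_snd, unfolded o_def]) simp_all
  have level: "continuous_map ?X euclideanreal (\<lambda>q. a + fst q * b + snd (snd q))"
    by (intro continuous_map_add continuous_map_real_mult_right continuous_map_fst
        continuous_map_snd_of[OF continuous_map_snd, unfolded o_def]) simp
  define N where "N = {q \<in> topspace ?X. x + fst q *\<^sub>R v + fst (snd q) \<in> {z \<in> topspace \<tau>. ereal r < g z}}
      \<inter> {q \<in> topspace ?X. a + fst q * b + snd (snd q) \<in> {..<r}}"
  have "openin ?X N"
    unfolding N_def
    by (intro openin_Int openin_continuous_map_preimage[OF path]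
        openin_continuous_map_preimage[OF level] lsc_on_openin_superlevel assms) simp
  moreover have "p \<in> N" using p r by (simp add: N_def)
  moreover have "N \<subseteq> ?P"
    by (auto simp: N_def) (metis less_ereal.simps(1) less_trans)
  ultimately show "\<exists>N. openin ?X N \<and> p \<in> N \<and> N \<subseteq> ?P" by blast
qed

lemma lsc_on_tube:
  assumes lsc: "lsc_on \<tau> g"
    and above: "\<And>\<theta>. \<theta> \<in> {0..1} \<Longrightarrow> ereal (a + \<theta> * b) < g (x + \<theta> *\<^sub>R v)"
  obtains W \<eta> where "openin \<tau> W" "0 \<in> W" "0 < \<eta>"
    "\<And>\<theta> w \<xi>. \<theta> \<in> {0..1} \<Longrightarrow> w \<in> W \<Longrightarrow> \<bar>\<xi>\<bar> < \<eta> \<Longrightarrow>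
       ereal (a + \<theta> * b + \<xi>) < g (x + \<theta> *\<^sub>R v + w)"
proof -
  let ?P = "{(\<theta>, w, \<xi>). ereal (a + \<theta> * b + \<xi>) < g (x + \<theta> *\<^sub>R v + w)}"
  have "{0..1} \<times> {(0, 0)} \<subseteq> ?P" using above by auto
  then obtain U V where V: "openin (prod_topology \<tau> euclideanreal) V" "(0, 0) \<in> V"
    and UV: "{0..1} \<subseteq> U" "U \<times> V \<subseteq> ?P"
    using tube_lemma_left[OF openin_below_lsc_on_affine_family[OF lsc, of a b x v], of "{0..1}" "(0, 0)"]
    by auto
  obtain W I where W: "openin \<tau> W" "0 \<in> W" and I: "openin euclideanreal I" "0 \<in> I"
    and "W \<times> I \<subseteq> V"
    using V(1)[unfolded openin_prod_topology_alt, rule_format, OF V(2)] by blast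
  moreover obtain \<eta> where "0 < \<eta>" "ball 0 \<eta> \<subseteq> I"
    using I open_contains_ball by (metis open_openin)
  ultimately show ?thesis
    using UV by (intro that[OF W \<open>0 < \<eta>\<close>]) (fastforce simp: subset_iff dist_real_def)
qed

end

section \<open>Epsilon-subgradients with prescribed directional values\<close>

lemma convex_epigraph:
  assumes "convex_fn g"
  shows "convex {(y, r::real). g y \<le> ereal r}"
proof (rule convexI, clarsimp)
  fix y1 r1 y2 r2 and u v :: real
  assume le: "g y1 \<le> ereal r1" "g y2 \<le> ereal r2" and uv: "0 \<le> u" "0 \<le> v" "u + v = 1"
  show "g (u *\<^sub>R y1 + v *\<^sub>R y2) \<le> ereal (u * r1 + v * r2)"
  proof (cases "u = 0 \<or> v = 0")
    case True
    then show ?thesis using le uv by auto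
  next
    case False
    then have "0 < u" "u < 1" "v = 1 - u" using uv by auto
    then have "g (u *\<^sub>R y1 + v *\<^sub>R y2) \<le> ereal u * g y1 + ereal (1 - u) * g y2"
      using assms unfolding convex_fn_def by blast
    also have "\<dots> \<le> ereal u * ereal r1 + ereal (1 - u) * ereal r2"
      using \<open>0 < u\<close> \<open>u < 1\<close> le by (intro add_mono ereal_mult_left_mono) auto
    finally show ?thesis using \<open>v = 1 - u\<close> by simp
  qed
qed

context lcs_space
begin

lemma tube_below_epigraph:
  assumes lsc: "lsc_on \<tau> g"
    and above: "\<And>\<theta>. \<theta> \<in> {0..1} \<Longrightarrow> ereal (a + \<theta> * b) < g (x + \<theta> *\<^sub>R v)"
  obtains A W where "convex A" "algebraically_open A" "A \<inter> {(y, r). g y \<le> ereal r} = {}"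
    and "openin \<tau> W" "0 \<in> W" "\<And>w. w \<in> W \<Longrightarrow> (x + w, a) \<in> A" "(x + v, a + b) \<in> A"
proof -
  obtain W0 \<eta> where W0: "openin \<tau> W0" "0 \<in> W0" "0 < \<eta>"
    and tube: "\<And>\<theta> w \<xi>. \<theta> \<in> {0..1} \<Longrightarrow> w \<in> W0 \<Longrightarrow> \<bar>\<xi>\<bar> < \<eta> \<Longrightarrow>
                 ereal (a + \<theta> * b + \<xi>) < g (x + \<theta> *\<^sub>R v + w)"
    using lsc_on_tube[OF lsc above] by metis
  obtain W where W: "openin \<tau> W" "convex W" "0 \<in> W" "W \<subseteq> W0"
    using lcs_convex_nbhd[OF W0(1,2)] by metis
  define A where "A = (\<Union>p\<in>closed_segment (x, a) (x + v, a + b). \<Union>q\<in>W \<times> ball 0 \<eta>. {p + q})"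
  have A_iff: "p \<in> A \<longleftrightarrow> (\<exists>\<theta> w \<xi>. \<theta> \<in> {0..1} \<and> w \<in> W \<and> \<bar>\<xi>\<bar> < \<eta> \<and>
      p = (x + \<theta> *\<^sub>R v + w, a + \<theta> * b + \<xi>))" for p
    unfolding A_def closed_segment_def
    by (auto simp: dist_real_def algebra_simps) (force simp: algebra_simps)
  have "convex A"
    unfolding A_def by (intro convex_sums convex_closed_segment convex_Times W(2) convex_ball)
  moreover have "algebraically_open A"
    unfolding A_def
    by (intro algebraically_open_sums algebraically_open_Times W(2) convex_ball
        openin_lcs_imp_algebraically_open W(1) open_imp_algebraically_open open_ball)
  moreover have "p \<notin> {(y, r). g y \<le> ereal r}" if pA: "p \<in> A" for p
  proof -
    obtain \<theta> w \<xi> where "\<theta> \<in> {0..1}" "w \<in> W" "\<bar>\<xi>\<bar> < \<eta>"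
      and p: "p = (x + \<theta> *\<^sub>R v + w, a + \<theta> * b + \<xi>)"
      using pA A_iff by blast
    then have "ereal (a + \<theta> * b + \<xi>) < g (x + \<theta> *\<^sub>R v + w)"
      using tube W(4) by blast
    then show ?thesis by (simp add: p)
  qed
  moreover have "(x + w, a) \<in> A" if "w \<in> W" for w
    unfolding A_iff using that W0(3) by (intro exI[of _ 0] exI[of _ w]) auto
  moreover have "(x + v, a + b) \<in> A"
    unfolding A_iff using W(3) W0(3) by (intro exI[of _ 1]) auto
  ultimately show ?thesis using that W(1,3) by blast
qed

lemma affine_minorant_below_segment:
  assumes conv: "convex_fn g" and lsc: "lsc_on \<tau> g" and gx: "g x = ereal gx" and "a < gx"
    and above: "\<And>\<theta>. \<theta> \<in> {0..1} \<Longrightarrow> ereal (a + \<theta> * b) < g (x + \<theta> *\<^sub>R v)"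
  obtains s where "s \<in> dual \<tau>" "\<And>y r. g y \<le> ereal r \<Longrightarrow> a + s (y - x) < r"
    and "a + b - s v < gx"
proof -
  obtain A W where A: "convex A" "algebraically_open A" "A \<inter> {(y, r). g y \<le> ereal r} = {}"
    and W: "openin \<tau> W" "0 \<in> W" and mem: "\<And>w. w \<in> W \<Longrightarrow> (x + w, a) \<in> A" "(x + v, a + b) \<in> A"
    using tube_below_epigraph[OF lsc above] by metis
  have "(x, a) \<in> A" using mem(1)[OF W(2)] by simp
  moreover have "(x, gx) \<in> {(y, r). g y \<le> ereal r}" using gx by simp
  ultimately obtain s where s: "linear s"
    and sep: "\<forall>(y, r)\<in>A. \<forall>(y', r')\<in>{(y, r). g y \<le> ereal r}. r + s (y' - y) < r'"
    using separation_nonvertical[OF A(1) convex_epigraph[OF conv] A(2,3) _ _ \<open>a < gx\<close>] by blast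
  have key: "r + s (y' - y) < r'" if "(y, r) \<in> A" "g y' \<le> ereal r'" for y r y' r'
    using sep that by blast
  have bound: "s w \<le> gx - a" if "w \<in> {w. (- 1) *\<^sub>R w + 0 \<in> W}" for w
    using key[OF mem(1), of "- w" x gx] that gx by (simp add: linear_neg[OF s])
  have "continuous_map \<tau> euclideanreal s"
    by (rule linear_continuous_if_bounded_above[OF s openin_lcs_affine_preimage[OF W(1)] _ bound])
      (use W(2) in simp)
  then have "s \<in> dual \<tau>" using s by (simp add: dual_def)
  moreover have "a + s (y - x) < r" if "g y \<le> ereal r" for y r
    using key[OF \<open>(x, a) \<in> A\<close> that] .
  moreover have "a + b - s v < gx"
    using key[OF mem(2), of x gx] gx s by (simp add: linear_neg)
  ultimately show ?thesis using that by blast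
qed

lemma eps_subdiff_large_in_direction:
  assumes proper: "proper_fn g" and "convex_fn g" "lsc_on \<tau> g"
    and gx: "g x = ereal gx" and "0 < \<epsilon>"
    and growth: "\<And>l. 0 < l \<Longrightarrow> ereal (gx - \<epsilon> / 2 + M * l) \<le> g (x + l *\<^sub>R z)"
  shows "\<exists>s\<in>eps_subdiff \<tau> \<epsilon> g x. M - 1 < s z"
proof -
  define a where "a = gx - \<epsilon> / 2"
  define b where "b = (M - 1 / 2) * \<epsilon>"
  have "ereal (a + \<theta> * b) < g (x + \<theta> *\<^sub>R (\<epsilon> *\<^sub>R z))" if "\<theta> \<in> {0..1}" for \<theta>
  proof (cases "\<theta> = 0")
    case True
    then show ?thesis using gx \<open>0 < \<epsilon>\<close> by (simp add: a_def)
  next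
    case False
    then have "0 < \<theta> * \<epsilon>" using that \<open>0 < \<epsilon>\<close> by simp
    then have "ereal (a + \<theta> * b) < ereal (gx - \<epsilon> / 2 + M * (\<theta> * \<epsilon>))"
      by (simp add: a_def b_def algebra_simps)
    also have "\<dots> \<le> g (x + (\<theta> * \<epsilon>) *\<^sub>R z)" by (rule growth) fact
    finally show ?thesis by simp
  qed
  moreover have "a < gx" using \<open>0 < \<epsilon>\<close> by (simp add: a_def)
  ultimately obtain s where s: "s \<in> dual \<tau>" and below: "\<And>y r. g y \<le> ereal r \<Longrightarrow> a + s (y - x) < r"
    and end_point: "a + b - s (\<epsilon> *\<^sub>R z) < gx"
    using affine_minorant_below_segment[OF assms(2-4)] by metis
  have "g x + ereal (s (y - x) - \<epsilon>) \<le> g y" for y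
  proof (cases "g y")
    case (real r)
    then show ?thesis using below[of y r] gx \<open>0 < \<epsilon>\<close> by (simp add: a_def)
  next
    case MInf
    then show ?thesis using proper unfolding proper_fn_def by blast
  qed simp
  then have "s \<in> eps_subdiff \<tau> \<epsilon> g x" using s gx by (simp add: eps_subdiff_def)
  moreover have "s (\<epsilon> *\<^sub>R z) = \<epsilon> * s z" using s by (simp add: dual_def linear_scale)
  then have "\<epsilon> * (M - 1) < \<epsilon> * s z"
    using end_point by (simp add: a_def b_def algebra_simps)
  then have "M - 1 < s z"
    using \<open>0 < \<epsilon>\<close> by (simp add: mult_less_cancel_left_pos)
  ultimately show ?thesis by blast
qed

end

section \<open>Separation in the weak-star topology\<close>

(* The weak* separation applies Hahn-Banach in the vector space of all real functions. *)
instantiation "fun" :: (type, real_vector) real_vector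
begin

definition scaleR_fun :: "real \<Rightarrow> ('a \<Rightarrow> 'b) \<Rightarrow> 'a \<Rightarrow> 'b" where
  "scaleR_fun r f = (\<lambda>x. r *\<^sub>R f x)"

instance
  by standard (simp_all add: scaleR_fun_def fun_eq_iff scaleR_add_right scaleR_add_left)

end

lemma scaleR_fun_apply [simp]: "(r *\<^sub>R f) x = r *\<^sub>R f x"
  by (simp add: scaleR_fun_def)

lemma sum_fun_apply: "(sum f S) y = (\<Sum>i\<in>S. f i y)"
  by (induction S rule: infinite_finite_induct) auto

lemma fconvex_imp_convex:
  assumes "fconvex C"
  shows "convex C"
proof (rule convexI)
  fix \<phi> \<psi> and u v :: real
  assume "\<phi> \<in> C" "\<psi> \<in> C" "0 \<le> u" "0 \<le> v" "u + v = 1"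
  then have "(\<lambda>z. u * \<phi> z + (1 - u) * \<psi> z) \<in> C"
    using assms unfolding fconvex_def by auto
  moreover have "u *\<^sub>R \<phi> + v *\<^sub>R \<psi> = (\<lambda>z. u * \<phi> z + (1 - u) * \<psi> z)"
    using \<open>u + v = 1\<close> by (auto simp: fun_eq_iff)
  ultimately show "u *\<^sub>R \<phi> + v *\<^sub>R \<psi> \<in> C" by simp
qed

lemma dual_lincomb:
  assumes "\<phi> \<in> dual \<tau>" "\<psi> \<in> dual \<tau>"
  shows "(\<lambda>z. a * \<phi> z + b * \<psi> z) \<in> dual \<tau>"
proof -
  have "linear \<phi>" "linear \<psi>" "continuous_map \<tau> euclideanreal \<phi>" "continuous_map \<tau> euclideanreal \<psi>"
    using assms by (auto simp: dual_def)
  then show ?thesis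
    unfolding dual_def
    by (auto intro!: linearI continuous_map_add continuous_map_real_mult_left
        simp: linear_add linear_scale algebra_simps)
qed

lemma wstar_nbhd_box:
  assumes "openin (wstar \<tau>) U" "q \<in> U"
  obtains Z \<delta> where "finite Z" "0 < \<delta>" "\<And>\<psi>. \<psi> \<in> dual \<tau> \<Longrightarrow> \<forall>z\<in>Z. \<bar>\<psi> z - q z\<bar> < \<delta> \<Longrightarrow> \<psi> \<in> U"
proof -
  obtain P where P: "openin (product_topology (\<lambda>_. euclideanreal) UNIV) P" "U = P \<inter> dual \<tau>"
    using assms(1) unfolding wstar_def openin_subtopology by blast
  then obtain V where V: "finite {i. V i \<noteq> UNIV}" "\<And>i. open (V i)" "q \<in> Pi\<^sub>E UNIV V" "Pi\<^sub>E UNIV V \<subseteq> P"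
    using assms(2) unfolding openin_product_topology_alt by force
  define Z where "Z = {i. V i \<noteq> UNIV}"
  have "\<forall>z\<in>Z. \<exists>e>0. ball (q z) e \<subseteq> V z"
    using V(2,3) open_contains_ball by blast
  then obtain e where e: "\<And>z. z \<in> Z \<Longrightarrow> 0 < e z \<and> ball (q z) (e z) \<subseteq> V z" by metis
  define \<delta> where "\<delta> = Min (insert 1 (e ` Z))"
  have "finite Z" using V(1) unfolding Z_def .
  then have "0 < \<delta>" "\<And>z. z \<in> Z \<Longrightarrow> \<delta> \<le> e z"
    unfolding \<delta>_def using e by auto
  moreover have "\<psi> \<in> U" if "\<psi> \<in> dual \<tau>" "\<forall>z\<in>Z. \<bar>\<psi> z - q z\<bar> < \<delta>" for \<psi>
  proof -
    have "\<psi> z \<in> V z" for z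
    proof (cases "z \<in> Z")
      case True
      then have "\<psi> z \<in> ball (q z) (e z)"
        using that \<open>\<And>z. z \<in> Z \<Longrightarrow> \<delta> \<le> e z\<close> by (force simp: dist_real_def abs_minus_commute)
      then show ?thesis using e True by blast
    qed (simp add: Z_def)
    then show ?thesis using V(4) P(2) that(1) by auto
  qed
  ultimately show ?thesis using that \<open>finite Z\<close> by blast
qed

lemma convex_box: "convex {u :: 'a \<Rightarrow> real. \<forall>z\<in>Z. \<bar>u z - q z\<bar> < \<delta>}"
  unfolding convex_def
proof (clarsimp)
  fix u v :: "'a \<Rightarrow> real" and s t :: real and z
  assume "\<forall>z\<in>Z. \<bar>u z - q z\<bar> < \<delta>" "\<forall>z\<in>Z. \<bar>v z - q z\<bar> < \<delta>" "0 \<le> s" "0 \<le> t" "s + t = 1" "z \<in> Z"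
  moreover have "s * u z + t * v z - q z = s * (u z - q z) + t * (v z - q z)"
    using \<open>s + t = 1\<close> by (simp add: algebra_simps flip: distrib_right)
  moreover have "\<bar>s * (u z - q z) + t * (v z - q z)\<bar> \<le> s * \<bar>u z - q z\<bar> + t * \<bar>v z - q z\<bar>"
    using \<open>0 \<le> s\<close> \<open>0 \<le> t\<close> abs_triangle_ineq[of "s * (u z - q z)" "t * (v z - q z)"]
    by (simp add: abs_mult)
  moreover have "s * \<bar>u z - q z\<bar> + t * \<bar>v z - q z\<bar> < \<delta>"
    using calculation by (intro convex_bound_lt) auto
  ultimately show "\<bar>s * u z + t * v z - q z\<bar> < \<delta>" by simp
qed

lemma algebraically_open_box:
  assumes "finite Z"
  shows "algebraically_open {u :: 'a \<Rightarrow> real. \<forall>z\<in>Z. \<bar>u z - q z\<bar> < \<delta>}"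
  unfolding algebraically_open_def
proof (clarsimp)
  fix u d assume u: "\<forall>z\<in>Z. \<bar>u z - q z\<bar> < \<delta>"
  define t where "t = Min (insert 1 ((\<lambda>z. (\<delta> - \<bar>u z - q z\<bar>) / (\<bar>d z\<bar> + 1)) ` Z))"
  have pos: "0 < \<bar>d z\<bar> + 1" for z by (simp add: add_nonneg_pos)
  have "0 < (\<delta> - \<bar>u z - q z\<bar>) / (\<bar>d z\<bar> + 1)" if "z \<in> Z" for z
    using u that pos by (intro divide_pos_pos) auto
  then have "0 < t" unfolding t_def using assms by (simp add: Min_gr_iff)
  moreover have "\<bar>u z + t * d z - q z\<bar> < \<delta>" if "z \<in> Z" for z
  proof -
    have "t \<le> (\<delta> - \<bar>u z - q z\<bar>) / (\<bar>d z\<bar> + 1)"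
      unfolding t_def using assms that by (intro Min_le) auto
    then have "t * (\<bar>d z\<bar> + 1) \<le> \<delta> - \<bar>u z - q z\<bar>"
      using pos_le_divide_eq[OF pos] by blast
    moreover have "\<bar>u z + t * d z - q z\<bar> \<le> \<bar>u z - q z\<bar> + t * \<bar>d z\<bar>"
      using \<open>0 < t\<close> abs_triangle_ineq[of "u z - q z" "t * d z"] by (simp add: abs_mult)
    ultimately show ?thesis using \<open>0 < t\<close> by (simp add: distrib_left)
  qed
  ultimately show "\<exists>t>0. \<forall>z\<in>Z. \<bar>u z + t * d z - q z\<bar> < \<delta>" by blast
qed

lemma linear_functional_finite_support_eval:
  fixes \<Phi> :: "('a::real_vector \<Rightarrow> real) \<Rightarrow> real"
  assumes \<Phi>: "linear \<Phi>" and "finite Z" and vanish: "\<And>h. \<forall>z\<in>Z. h z = 0 \<Longrightarrow> \<Phi> h = 0"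
  obtains w where "\<And>\<psi>. linear \<psi> \<Longrightarrow> \<psi> w = \<Phi> \<psi>"
proof
  fix \<psi> :: "'a \<Rightarrow> real" assume \<psi>: "linear \<psi>"
  define \<psi>' :: "'a \<Rightarrow> real" where "\<psi>' = (\<Sum>z\<in>Z. \<psi> z *\<^sub>R indicator {z})"
  have "\<forall>z\<in>Z. (\<psi> - \<psi>') z = 0"
    using \<open>finite Z\<close> by (simp add: \<psi>'_def sum_fun_apply indicator_def if_distrib cong: if_cong)
  then have "\<Phi> \<psi> = \<Phi> \<psi>'"
    using vanish[of "\<psi> - \<psi>'"] \<Phi> by (simp add: linear_diff)
  also have "\<dots> = (\<Sum>z\<in>Z. \<psi> z * \<Phi> (indicator {z}))"
    unfolding \<psi>'_def using \<Phi> by (simp add: linear_sum linear_scale)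
  also have "\<dots> = \<psi> (\<Sum>z\<in>Z. \<Phi> (indicator {z}) *\<^sub>R z)"
    using \<psi> by (simp add: linear_sum linear_scale mult.commute)
  finally show "\<psi> (\<Sum>z\<in>Z. \<Phi> (indicator {z}) *\<^sub>R z) = \<Phi> \<psi>" by simp
qed

theorem wstar_separation:
  assumes C: "C \<subseteq> dual \<tau>" "closedin (wstar \<tau>) C" "fconvex C" and q: "q \<in> dual \<tau>" "q \<notin> C"
  shows "\<exists>z c. (\<forall>\<psi>\<in>C. \<psi> z \<le> c) \<and> c < q z"
proof (cases "C = {}")
  case True
  then show ?thesis by (intro exI[of _ 0] exI[of _ "q 0 - 1"]) auto
next
  case False
  then obtain \<psi>0 where "\<psi>0 \<in> C" by blast
  have "openin (wstar \<tau>) (dual \<tau> - C)"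
    using C(2) unfolding closedin_def wstar_def by simp
  then obtain Z \<delta> where "finite Z" "0 < \<delta>"
    and box: "\<And>\<psi>. \<psi> \<in> dual \<tau> \<Longrightarrow> \<forall>z\<in>Z. \<bar>\<psi> z - q z\<bar> < \<delta> \<Longrightarrow> \<psi> \<in> dual \<tau> - C"
    using wstar_nbhd_box q by (metis DiffI)
  define A where "A = {u :: 'a \<Rightarrow> real. \<forall>z\<in>Z. \<bar>u z - q z\<bar> < \<delta>}"
  have "A \<inter> C = {}" using box C(1) unfolding A_def by blast
  then obtain \<Phi> :: "('a \<Rightarrow> real) \<Rightarrow> real" where \<Phi>: "linear \<Phi>" and sep: "\<forall>u\<in>A. \<forall>\<psi>\<in>C. \<Phi> u < \<Phi> \<psi>"
    using separation_algebraically_open[OF convex_box fconvex_imp_convex[OF C(3)]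
        algebraically_open_box[OF \<open>finite Z\<close>]] unfolding A_def by blast
  have "q \<in> A" using \<open>0 < \<delta>\<close> by (simp add: A_def)
  then obtain \<gamma> where "0 < \<gamma>" and margin: "\<And>\<psi>. \<psi> \<in> C \<Longrightarrow> \<Phi> q + \<gamma> \<le> \<Phi> \<psi>"
    using linear_separation_margin[OF \<Phi> _ _ sep] algebraically_open_box[OF \<open>finite Z\<close>]
    unfolding A_def by blast
  have "\<Phi> h = 0" if "\<forall>z\<in>Z. h z = 0" for h
  proof (rule ccontr)
    assume "\<Phi> h \<noteq> 0"
    define t where "t = (\<Phi> \<psi>0 - \<Phi> q) / \<Phi> h"
    have "q + t *\<^sub>R h \<in> A" using that \<open>q \<in> A\<close> by (simp add: A_def)
    then have "\<Phi> (q + t *\<^sub>R h) < \<Phi> \<psi>0" using sep \<open>\<psi>0 \<in> C\<close> by blast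
    then show False
      using \<Phi> \<open>\<Phi> h \<noteq> 0\<close> by (simp add: linear_add linear_scale t_def)
  qed
  then obtain w where w: "\<And>\<psi>. linear \<psi> \<Longrightarrow> \<psi> w = \<Phi> \<psi>"
    using linear_functional_finite_support_eval[OF \<Phi> \<open>finite Z\<close>] by blast
  have "\<psi> (- w) \<le> - (\<Phi> q + \<gamma>)" if "\<psi> \<in> C" for \<psi>
    using that C(1) margin[OF that] w[of \<psi>] by (auto simp: dual_def linear_neg)
  moreover have "- (\<Phi> q + \<gamma>) < q (- w)"
    using q(1) w[of q] \<open>0 < \<gamma>\<close> by (simp add: dual_def linear_neg)
  ultimately show ?thesis by blast
qed

section \<open>Normal cones and recession cones\<close>

lemma fconvex_dual: "fconvex (dual \<tau>)"
  unfolding fconvex_def using dual_lincomb by blast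

lemma topspace_wstar [simp]: "topspace (wstar \<tau>) = dual \<tau>"
  unfolding wstar_def by simp

lemma wstar_clco_minimal:
  "A \<subseteq> dual \<tau> \<Longrightarrow> closedin (wstar \<tau>) A \<Longrightarrow> fconvex A \<Longrightarrow> S \<subseteq> A \<Longrightarrow> wstar_clco \<tau> S \<subseteq> A"
  unfolding wstar_clco_def by blast

lemma subset_wstar_clco: "S \<subseteq> wstar_clco \<tau> S"
  unfolding wstar_clco_def by blast

lemma closedin_wstar_dual: "closedin (wstar \<tau>) (dual \<tau>)"
  using closedin_topspace[of "wstar \<tau>"] by simp

lemma wstar_clco_subset_dual: "S \<subseteq> dual \<tau> \<Longrightarrow> wstar_clco \<tau> S \<subseteq> dual \<tau>"
  by (rule wstar_clco_minimal[OF order_refl closedin_wstar_dual fconvex_dual])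

lemma closedin_wstar_clco:
  assumes "S \<subseteq> dual \<tau>"
  shows "closedin (wstar \<tau>) (wstar_clco \<tau> S)"
  unfolding wstar_clco_def
proof (rule closedin_Inter)
  show "{A. A \<subseteq> dual \<tau> \<and> closedin (wstar \<tau>) A \<and> fconvex A \<and> S \<subseteq> A} \<noteq> {}"
    using assms fconvex_dual closedin_wstar_dual by auto
qed blast

lemma fconvex_wstar_clco: "fconvex (wstar_clco \<tau> S)"
  unfolding wstar_clco_def fconvex_def by blast

lemma halfspace_wstar_closed: "closedin (wstar \<tau>) {\<psi> \<in> dual \<tau>. \<psi> w \<le> K}"
proof -
  have "closedin (product_topology (\<lambda>_. euclideanreal) UNIV)
      {\<psi> \<in> topspace (product_topology (\<lambda>_. euclideanreal) UNIV). \<psi> w \<in> {..K}}"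
    by (rule closedin_continuous_map_preimage[OF continuous_map_product_projection]) auto
  then show ?thesis
    unfolding wstar_def closedin_subtopology by auto
qed

lemma fconvex_halfspace: "fconvex {\<psi> \<in> dual \<tau>. \<psi> w \<le> K}"
  unfolding fconvex_def using dual_lincomb by (auto intro: convex_bound_le)

lemma wstar_clco_bounded:
  assumes "S \<subseteq> dual \<tau>" "\<And>\<psi>. \<psi> \<in> S \<Longrightarrow> \<psi> w \<le> K" "\<psi> \<in> wstar_clco \<tau> S"
  shows "\<psi> w \<le> K"
  using wstar_clco_minimal[OF _ halfspace_wstar_closed fconvex_halfspace, of \<tau> w K S] assms by blast

lemma normal_cone_subset_recession_cone:
  assumes C: "C \<subseteq> dual \<tau>" "closedin (wstar \<tau>) C" "fconvex C"
    and ray: "\<And>z c. \<forall>\<psi>\<in>C. \<psi> z \<le> c \<Longrightarrow> \<exists>\<mu>>0. x + \<mu> *\<^sub>R z \<in> D"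
  shows "normal_cone \<tau> D x \<subseteq> recession_cone C"
proof (clarsimp simp: recession_cone_def)
  fix \<phi> y and l :: real
  assume \<phi>: "\<phi> \<in> normal_cone \<tau> D x" and "y \<in> C" "0 \<le> l"
  show "(\<lambda>z. y z + l * \<phi> z) \<in> C"
  proof (rule ccontr)
    assume notin: "(\<lambda>z. y z + l * \<phi> z) \<notin> C"
    have "(\<lambda>z. 1 * y z + l * \<phi> z) \<in> dual \<tau>"
      using \<phi> C(1) \<open>y \<in> C\<close> by (intro dual_lincomb) (auto simp: normal_cone_def)
    then obtain z c where bound: "\<forall>\<psi>\<in>C. \<psi> z \<le> c" and "c < y z + l * \<phi> z"
      using wstar_separation[OF C _ notin] by auto
    then have "0 < l * \<phi> z" using \<open>y \<in> C\<close> by fastforce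
    then have "0 < \<phi> z" using \<open>0 \<le> l\<close> by (simp add: zero_less_mult_iff)
    obtain \<mu> where "0 < \<mu>" "x + \<mu> *\<^sub>R z \<in> D" using ray[OF bound] by blast
    then have "\<phi> (\<mu> *\<^sub>R z) \<le> 0" using \<phi> by (auto simp: normal_cone_def)
    then show False
      using \<phi> \<open>0 < \<mu>\<close> \<open>0 < \<phi> z\<close> by (simp add: normal_cone_def dual_def linear_scale mult_le_0_iff)
  qed
qed

lemma recession_cone_subset_normal_cone:
  assumes C: "C \<subseteq> dual \<tau>" "y0 \<in> C"
    and bounded: "\<And>w. w \<in> D \<Longrightarrow> \<exists>K. \<forall>\<psi>\<in>C. \<psi> (w - x) \<le> K"
  shows "recession_cone C \<subseteq> normal_cone \<tau> D x"
proof
  fix d assume d: "d \<in> recession_cone C"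
  then have "(\<lambda>z. y0 z + 1 * d z) \<in> C"
    using C(2) zero_le_one unfolding recession_cone_def by blast
  then have "(\<lambda>z. 1 * (\<lambda>z. y0 z + 1 * d z) z + (- 1) * y0 z) \<in> dual \<tau>"
    using C by (intro dual_lincomb) auto
  then have "d \<in> dual \<tau>" by simp
  moreover have "d (w - x) \<le> 0" if w: "w \<in> D" for w
  proof (rule ccontr)
    assume "\<not> d (w - x) \<le> 0"
    obtain K where K: "\<forall>\<psi>\<in>C. \<psi> (w - x) \<le> K" using bounded[OF w] by blast
    define l where "l = (K - y0 (w - x) + 1) / d (w - x)"
    have "0 \<le> l" using K C(2) \<open>\<not> d (w - x) \<le> 0\<close> by (simp add: l_def)
    then have "y0 (w - x) + l * d (w - x) \<le> K"
      using d C(2) K by (auto simp: recession_cone_def)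
    then show False using \<open>\<not> d (w - x) \<le> 0\<close> by (simp add: l_def)
  qed
  ultimately show "d \<in> normal_cone \<tau> D x" by (simp add: normal_cone_def)
qed

section \<open>Suprema of compact families\<close>

lemma ereal_less_plus_real_iff: "ereal r < y + ereal c \<longleftrightarrow> ereal (r - c) < y"
  by (cases y) auto

lemma lsc_on_compact_bounded_below:
  assumes "compact_space X" "lsc_on X h" "\<And>t. t \<in> topspace X \<Longrightarrow> h t \<noteq> -\<infinity>"
  obtains m :: real where "\<And>t. t \<in> topspace X \<Longrightarrow> ereal m < h t"
proof -
  define V where "V n = {t \<in> topspace X. ereal (- real n) < h t}" for n :: nat
  have "\<forall>U\<in>range V. openin X U"
    unfolding V_def using lsc_on_openin_superlevel[OF assms(2)] by blast
  moreover have "topspace X \<subseteq> \<Union>(range V)"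
  proof
    fix t assume t: "t \<in> topspace X"
    have "- h t \<noteq> \<infinity>" using assms(3)[OF t] by (simp add: ereal_uminus_eq_reorder)
    then obtain n :: nat where "- h t < ereal (real n)" using less_PInf_Ex_of_nat by blast
    then have "ereal (- real n) < h t" by (metis ereal_uminus_less_reorder uminus_ereal.simps(1))
    then show "t \<in> \<Union>(range V)" using t by (auto simp: V_def)
  qed
  ultimately obtain \<F> where "finite \<F>" "\<F> \<subseteq> range V" "topspace X \<subseteq> \<Union>\<F>"
    using assms(1) unfolding compact_space_alt by meson
  then obtain N where "finite N" "topspace X \<subseteq> \<Union>(V ` N)"
    by (metis finite_subset_image)
  have "ereal (- real (Max (insert 0 N))) < h t" if t: "t \<in> topspace X" for t
  proof -
    obtain n where "n \<in> N" "ereal (- real n) < h t"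
      using t \<open>topspace X \<subseteq> \<Union>(V ` N)\<close> by (auto simp: V_def)
    moreover have "n \<le> Max (insert 0 N)" using \<open>finite N\<close> \<open>n \<in> N\<close> by simp
    ultimately show ?thesis by (meson ereal_less_eq(3) le_less_trans neg_le_iff_le of_nat_le_iff)
  qed
  then show ?thesis using that by blast
qed

lemma openin_usc_less_lsc:
  assumes usc: "usc_on X h1" and lsc: "lsc_on X h2"
  shows "openin X {t \<in> topspace X. h1 t < h2 t + ereal c}"
proof (subst openin_subopen, intro ballI)
  fix t0 assume "t0 \<in> {t \<in> topspace X. h1 t < h2 t + ereal c}"
  then obtain r where "t0 \<in> topspace X" "h1 t0 < ereal r" "ereal r < h2 t0 + ereal c"
    using ereal_dense2 by blast
  define N where "N = {t \<in> topspace X. h1 t < ereal r} \<inter> {t \<in> topspace X. ereal (r - c) < h2 t}"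
  have "openin X N"
    unfolding N_def using usc lsc_on_openin_superlevel[OF lsc] unfolding usc_on_def by blast
  moreover have "t0 \<in> N"
    using \<open>t0 \<in> topspace X\<close> \<open>h1 t0 < ereal r\<close> \<open>ereal r < h2 t0 + ereal c\<close>
    by (simp add: N_def ereal_less_plus_real_iff)
  moreover have "N \<subseteq> {t \<in> topspace X. h1 t < h2 t + ereal c}"
    by (auto simp: N_def simp flip: ereal_less_plus_real_iff)
  ultimately show "\<exists>N. openin X N \<and> t0 \<in> N \<and> N \<subseteq> {t \<in> topspace X. h1 t < h2 t + ereal c}"
    by blast
qed

lemma convex_fn_ray_le:
  assumes conv: "convex_fn g" and gx: "g x = ereal r" and "0 < \<mu>" "\<mu> \<le> l"
    and le: "g (x + l *\<^sub>R z) \<le> ereal (r + l * k)"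
  shows "g (x + \<mu> *\<^sub>R z) \<le> ereal (r + \<mu> * k)"
proof (cases "\<mu> = l")
  case True
  then show ?thesis using le by simp
next
  case False
  define \<theta> where "\<theta> = \<mu> / l"
  have \<theta>: "0 < \<theta>" "\<theta> < 1" "\<theta> * l = \<mu>"
    using \<open>0 < \<mu>\<close> \<open>\<mu> \<le> l\<close> False by (auto simp: \<theta>_def)
  have "x + \<mu> *\<^sub>R z = \<theta> *\<^sub>R (x + l *\<^sub>R z) + (1 - \<theta>) *\<^sub>R x"
    using \<theta>(3) by (simp add: algebra_simps)
  moreover have "g (\<theta> *\<^sub>R (x + l *\<^sub>R z) + (1 - \<theta>) *\<^sub>R x)
      \<le> ereal \<theta> * g (x + l *\<^sub>R z) + ereal (1 - \<theta>) * g x"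
    using conv \<theta>(1,2) unfolding convex_fn_def by blast
  ultimately have "g (x + \<mu> *\<^sub>R z) \<le> ereal \<theta> * g (x + l *\<^sub>R z) + ereal (1 - \<theta>) * g x"
    by simp
  also have "\<dots> \<le> ereal \<theta> * ereal (r + l * k) + ereal (1 - \<theta>) * ereal r"
    using le gx \<theta> by (intro add_mono ereal_mult_left_mono) auto
  also have "\<dots> = ereal (r + \<mu> * k)"
    unfolding \<theta>(3)[symmetric] by (simp add: algebra_simps)
  finally show ?thesis .
qed

lemma edom_SUP_bounded:
  assumes "x \<in> edom (\<lambda>z. SUP t\<in>T. F t z)"
  obtains B where "\<And>t. t \<in> T \<Longrightarrow> F t x \<le> ereal B"
proof -
  obtain n :: nat where "(SUP t\<in>T. F t x) < ereal (real n)"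
    using assms less_PInf_Ex_of_nat unfolding edom_def by auto
  then show ?thesis
    using that[of "real n"] by (meson SUP_upper less_imp_le order_trans)
qed

lemma edom_SUP_along_ray:
  fixes F :: "'b \<Rightarrow> 'a::real_vector \<Rightarrow> ereal"
  assumes compact: "compact_space X"
    and usc: "\<And>z. usc_on X (\<lambda>t. F t z)" and lsc: "lsc_on X (\<lambda>t. F t x)"
    and conv: "\<And>t. t \<in> topspace X \<Longrightarrow> convex_fn (F t)"
    and proper: "\<And>t. t \<in> topspace X \<Longrightarrow> F t x \<noteq> -\<infinity>"
    and dom: "x \<in> edom (\<lambda>z. SUP t\<in>topspace X. F t z)"
    and descent: "\<And>t. t \<in> topspace X \<Longrightarrow> \<exists>l>0. F t (x + l *\<^sub>R z) < F t x + ereal (k * l)"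
  shows "\<exists>\<mu>>0. x + \<mu> *\<^sub>R z \<in> edom (\<lambda>z. SUP t\<in>topspace X. F t z)"
proof -
  define U where "U l = {t \<in> topspace X. F t (x + l *\<^sub>R z) < F t x + ereal (k * l)}" for l
  have "\<forall>V\<in>U ` {0<..}. openin X V"
    unfolding U_def using openin_usc_less_lsc[OF usc lsc] by blast
  moreover have "topspace X \<subseteq> \<Union>(U ` {0<..})"
    using descent unfolding U_def by fastforce
  ultimately obtain \<F> where "finite \<F>" "\<F> \<subseteq> U ` {0<..}" "topspace X \<subseteq> \<Union>\<F>"
    using compact unfolding compact_space_alt by meson
  then obtain \<Lambda> where \<Lambda>: "finite \<Lambda>" "\<Lambda> \<subseteq> {0<..}" "topspace X \<subseteq> \<Union>(U ` \<Lambda>)"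
    by (metis finite_subset_image)
  define \<mu> where "\<mu> = Min (insert 1 \<Lambda>)"
  have "0 < \<mu>" using \<Lambda> by (auto simp: \<mu>_def)
  obtain B where B: "\<And>t. t \<in> topspace X \<Longrightarrow> F t x \<le> ereal B"
    using edom_SUP_bounded[OF dom] by blast
  have "F t (x + \<mu> *\<^sub>R z) \<le> ereal (B + \<mu> * \<bar>k\<bar>)" if t: "t \<in> topspace X" for t
  proof -
    obtain l where "l \<in> \<Lambda>" and l: "F t (x + l *\<^sub>R z) < F t x + ereal (k * l)"
      using t \<Lambda>(3) by (auto simp: U_def)
    obtain r where r: "F t x = ereal r"
      using proper[OF t] B[OF t] by (cases "F t x") auto
    have "F t (x + \<mu> *\<^sub>R z) \<le> ereal (r + \<mu> * k)"
    proof (rule convex_fn_ray_le[OF conv[OF t] r \<open>0 < \<mu>\<close>])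
      show "\<mu> \<le> l" using \<Lambda>(1) \<open>l \<in> \<Lambda>\<close> by (simp add: \<mu>_def)
      show "F t (x + l *\<^sub>R z) \<le> ereal (r + l * k)" using l r by (simp add: mult.commute)
    qed
    also have "\<dots> \<le> ereal (B + \<mu> * \<bar>k\<bar>)"
      using B[OF t] r \<open>0 < \<mu>\<close> by (simp add: add_mono mult_left_mono)
    finally show ?thesis .
  qed
  then have "(SUP t\<in>topspace X. F t (x + \<mu> *\<^sub>R z)) \<le> ereal (B + \<mu> * \<bar>k\<bar>)"
    by (rule SUP_least)
  then show ?thesis using \<open>0 < \<mu>\<close> by (auto simp: edom_def order.strict_trans1)
qed

context lcs_space
begin

lemma normal_cone_edom_SUP_subset:
  assumes F: "\<And>t. t \<in> topspace X \<Longrightarrow> proper_fn (F t) \<and> convex_fn (F t) \<and> lsc_on \<tau> (F t)"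
    and "compact_space X" "\<And>z. usc_on X (\<lambda>t. F t z)" "lsc_on X (\<lambda>t. F t x)"
    and dom: "x \<in> edom (\<lambda>z. SUP t\<in>topspace X. F t z)" and "0 < \<epsilon>"
  shows "normal_cone \<tau> (edom (\<lambda>z. SUP t\<in>topspace X. F t z)) x \<subseteq>
      recession_cone (wstar_clco \<tau> (\<Union>t\<in>topspace X. eps_subdiff \<tau> \<epsilon> (F t) x))"
    (is "_ \<subseteq> recession_cone (wstar_clco \<tau> ?S)")
proof -
  have S: "?S \<subseteq> dual \<tau>" by (auto simp: eps_subdiff_def)
  obtain B where B: "\<And>t. t \<in> topspace X \<Longrightarrow> F t x \<le> ereal B"
    using edom_SUP_bounded[OF dom] by blast
  have "\<exists>\<mu>>0. x + \<mu> *\<^sub>R z \<in> edom (\<lambda>z. SUP t\<in>topspace X. F t z)"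
    if bound: "\<forall>\<psi>\<in>wstar_clco \<tau> ?S. \<psi> z \<le> c" for z c
  proof (rule edom_SUP_along_ray[OF assms(2-4) _ _ dom])
    fix t assume t: "t \<in> topspace X"
    obtain r where r: "F t x = ereal r"
      using F[OF t] B[OF t] unfolding proper_fn_def by (cases "F t x") auto
    show "\<exists>l>0. F t (x + l *\<^sub>R z) < F t x + ereal ((c + 1) * l)"
    proof (rule ccontr)
      assume neg: "\<not> ?thesis"
      have growth: "ereal (r - \<epsilon> / 2 + (c + 1) * l) \<le> F t (x + l *\<^sub>R z)" if "0 < l" for l
      proof -
        have "ereal (r - \<epsilon> / 2 + (c + 1) * l) \<le> F t x + ereal ((c + 1) * l)"
          using r \<open>0 < \<epsilon>\<close> by simp
        also have "\<dots> \<le> F t (x + l *\<^sub>R z)" using neg that by (meson not_less)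
        finally show ?thesis .
      qed
      obtain s where "s \<in> eps_subdiff \<tau> \<epsilon> (F t) x" "c < s z"
        using eps_subdiff_large_in_direction[of "F t" x r \<epsilon> "c + 1" z] F[OF t] r \<open>0 < \<epsilon>\<close> growth
        by auto
      then show False using bound t subset_wstar_clco[of ?S \<tau>] by fastforce
    qed
  qed (use F in \<open>auto simp: proper_fn_def\<close>)
  then show ?thesis
    by (intro normal_cone_subset_recession_cone wstar_clco_subset_dual[OF S]
        closedin_wstar_clco[OF S] fconvex_wstar_clco)
qed

lemma recession_cone_subset_normal_cone_edom_SUP:
  assumes F: "\<And>t. t \<in> topspace X \<Longrightarrow> proper_fn (F t) \<and> convex_fn (F t) \<and> lsc_on \<tau> (F t)"
    and "t0 \<in> topspace X" and dom: "x \<in> edom (\<lambda>z. SUP t\<in>topspace X. F t z)"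
    and below: "\<And>t. t \<in> topspace X \<Longrightarrow> ereal m < F t x" and "0 < \<epsilon>"
  shows "recession_cone (wstar_clco \<tau> (\<Union>t\<in>topspace X. eps_subdiff \<tau> \<epsilon> (F t) x)) \<subseteq>
      normal_cone \<tau> (edom (\<lambda>z. SUP t\<in>topspace X. F t z)) x"
    (is "recession_cone (wstar_clco \<tau> ?S) \<subseteq> _")
proof -
  have S: "?S \<subseteq> dual \<tau>" by (auto simp: eps_subdiff_def)
  obtain B where B: "\<And>t. t \<in> topspace X \<Longrightarrow> F t x \<le> ereal B"
    using edom_SUP_bounded[OF dom] by blast
  have real_valued: "\<exists>r. F t x = ereal r" if "t \<in> topspace X" for t
    using below[OF that] B[OF that] by (cases "F t x") auto
  obtain r0 where r0: "F t0 x = ereal r0" using real_valued[OF \<open>t0 \<in> topspace X\<close>] by blast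
  obtain y0 where "y0 \<in> eps_subdiff \<tau> \<epsilon> (F t0) x"
    using eps_subdiff_large_in_direction[of "F t0" x r0 \<epsilon> 0 0] F[OF \<open>t0 \<in> topspace X\<close>] r0 \<open>0 < \<epsilon>\<close>
    by auto
  then have "y0 \<in> wstar_clco \<tau> ?S"
    using \<open>t0 \<in> topspace X\<close> subset_wstar_clco[of ?S \<tau>] by blast
  moreover have "\<exists>K. \<forall>\<psi>\<in>wstar_clco \<tau> ?S. \<psi> (w - x) \<le> K"
    if w: "w \<in> edom (\<lambda>z. SUP t\<in>topspace X. F t z)" for w
  proof -
    obtain Bw where Bw: "\<And>t. t \<in> topspace X \<Longrightarrow> F t w \<le> ereal Bw"
      using edom_SUP_bounded[OF w] by blast
    have "\<psi> (w - x) \<le> Bw - m + \<epsilon>"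
      if t: "t \<in> topspace X" and \<psi>: "\<psi> \<in> eps_subdiff \<tau> \<epsilon> (F t) x" for t \<psi>
    proof -
      obtain r where r: "F t x = ereal r" using real_valued[OF t] by blast
      have "ereal (r + (\<psi> (w - x) - \<epsilon>)) \<le> F t w"
        using \<psi> r unfolding eps_subdiff_def by auto
      also have "\<dots> \<le> ereal Bw" by (rule Bw[OF t])
      finally have "ereal (r + (\<psi> (w - x) - \<epsilon>)) \<le> ereal Bw" .
      then show ?thesis using below[OF t] r by simp
    qed
    then show ?thesis using wstar_clco_bounded[OF S] by blast
  qed
  ultimately show ?thesis
    by (rule recession_cone_subset_normal_cone[OF wstar_clco_subset_dual[OF S]])
qed

end

theorem corollary3:
  fixes \<tau> :: "'a::real_vector topology"
    and TT :: "'b topology"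
    and F :: "'b \<Rightarrow> 'a \<Rightarrow> ereal"
    and x :: 'a
  assumes "lcs \<tau>"
    and "topspace TT \<noteq> {}"
    and "\<forall>t\<in>topspace TT. proper_fn (F t) \<and> convex_fn (F t) \<and> lsc_on \<tau> (F t)"
    and "compact_space TT" and "Hausdorff_space TT"
    and "\<forall>z. usc_on TT (\<lambda>t. F t z)"
    and "x \<in> edom (\<lambda>z. SUP t\<in>topspace TT. F t z)"
    and "lsc_on TT (\<lambda>t. F t x)"
  shows "(INF t\<in>topspace TT. F t x) > -\<infinity> \<and>
    (\<forall>\<epsilon>>0. normal_cone \<tau> (edom (\<lambda>z. SUP t\<in>topspace TT. F t z)) x =
       recession_cone (wstar_clco \<tau> (\<Union>t\<in>topspace TT. eps_subdiff \<tau> \<epsilon> (F t) x)))"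
proof -
  interpret lcs_space \<tau> by (rule lcs_space.intro) fact
  have F: "\<And>t. t \<in> topspace TT \<Longrightarrow> proper_fn (F t) \<and> convex_fn (F t) \<and> lsc_on \<tau> (F t)"
    using assms(3) by blast
  obtain t0 where "t0 \<in> topspace TT" using assms(2) by blast
  have "F t x \<noteq> -\<infinity>" if "t \<in> topspace TT" for t
    using F[OF that] unfolding proper_fn_def by blast
  then obtain m where m: "\<And>t. t \<in> topspace TT \<Longrightarrow> ereal m < F t x"
    using lsc_on_compact_bounded_below[OF assms(4,8)] by blast
  then have "ereal m \<le> (INF t\<in>topspace TT. F t x)"
    by (intro INF_greatest less_imp_le)
  then have "-\<infinity> < (INF t\<in>topspace TT. F t x)"
    by (rule order.strict_trans2[rotated]) simp
  moreover have "normal_cone \<tau> (edom (\<lambda>z. SUP t\<in>topspace TT. F t z)) x =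
       recession_cone (wstar_clco \<tau> (\<Union>t\<in>topspace TT. eps_subdiff \<tau> \<epsilon> (F t) x))" if "0 < \<epsilon>" for \<epsilon>
    using normal_cone_edom_SUP_subset[OF F assms(4) _ assms(8,7) that]
      recession_cone_subset_normal_cone_edom_SUP[OF F \<open>t0 \<in> topspace TT\<close> assms(7) m that] assms(6)
    by blast
  ultimately show ?thesis by blast
qed

end
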